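(* Consider a state-dependent discrete memoryless channel $W_{Y,Z|X,S}$ with finite alphabets, i.i.d. state distribution $Q_S$, innocent symbol $x_0$, and causal channel state information available only at the transmitter (encoder $X_i=f_i(M,S^i)$, decoder $Y^n\mapsto\hat M$). Let $\mathcal D$ be the set of joint pmfs $P_{S,U,X,Y,Z}=Q_SP_U\mathbb 1_{\{X=x(U,S)\}}W_{Y,Z|X,S}$, where $U$ is an auxiliary random variable on a finite alphabet with $|\mathcal U|\le|\mathcal X|+1$ and $x:\mathcal U\times\mathcal S\to\mathcal X$ is deterministic, such that $P_Z=Q_0$ and $\mathbb I(U;Y)>\mathbb I(U;Z)$. Let $\mathcal S=\{R\ge0:\exists P\in\mathcal D\text{ with }R\le\mathbb I(U;Y)\}$. Then the covert capacity satisfies $C_{\mathrm{C\text{-}T}}\ge\max\{x:x\in\mathcal S\}$.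
   Context: Finite alphabets $\mathcal S,\mathcal X,\mathcal Y,\mathcal Z$. The channel has transition pmf $W_{Y,Z|X,S}$: input $X$, state $S$, output $Y$ at the legitimate receiver and output $Z$ at an adversary (warden). The state sequence $S^n$ is i.i.d. with pmf $Q_S$ and independent of the message; neither the legitimate receiver nor the warden knows the state. $x_0\in\mathcal X$ is a fixed innocent symbol, and $Q_0(z)=\sum_{s}Q_S(s)W_{Z|X,S}(z|x_0,s)$, assumed to have full support on $\mathcal Z$. A $(2^{nR},n)$ code consists of a message $M$ uniform on $\{1,\dots,2^{nR}\}$, an encoder and a decoder of the type specified. $P_{Z^n}$ denotes the distribution of the warden's output induced by the code. A rate $R$ is achievable if there is a sequence of $(2^{nR},n)$ codes with $\mathbb P(\hat M\ne M)\to 0$ and $\mathbb D(P_{Z^n}\|Q_0^{\otimes n})\to 0$ as $n\to\infty$; the covert capacity is the supremum of achievable rates. Mutual informations are computed under the indicated joint pmf. *)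

theory Defs
  imports "HOL-Probability.Probability"
begin

fun iid_list :: "'a pmf \<Rightarrow> nat \<Rightarrow> 'a list pmf" where
  "iid_list p 0 = return_pmf []"
| "iid_list p (Suc n) =
     bind_pmf p (\<lambda>x. bind_pmf (iid_list p n) (\<lambda>xs. return_pmf (x # xs)))"

fun prod_pmf_list :: "'a pmf list \<Rightarrow> 'a list pmf" where
  "prod_pmf_list [] = return_pmf []"
| "prod_pmf_list (p # ps) =
     bind_pmf p (\<lambda>x. bind_pmf (prod_pmf_list ps) (\<lambda>xs. return_pmf (x # xs)))"

definition kl_div :: "'a pmf \<Rightarrow> 'a pmf \<Rightarrow> real" where
  "kl_div P Q = (\<Sum>a\<in>set_pmf P. pmf P a * log 2 (pmf P a / pmf Q a))"

definition mut_inf :: "('a \<times> 'b) pmf \<Rightarrow> real" where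
  "mut_inf J = (\<Sum>ab\<in>set_pmf J.
      pmf J ab * log 2 (pmf J ab / (pmf (map_pmf fst J) (fst ab) * pmf (map_pmf snd J) (snd ab))))"

(* warden's output distribution under the innocent symbol *)
definition Q0 :: "'s pmf \<Rightarrow> ('x \<Rightarrow> 's \<Rightarrow> ('y \<times> 'z) pmf) \<Rightarrow> 'x \<Rightarrow> 'z pmf" where
  "Q0 QS W x0 = bind_pmf QS (\<lambda>s. map_pmf snd (W x0 s))"

definition num_msgs :: "nat \<Rightarrow> real \<Rightarrow> nat" where
  "num_msgs n R = nat \<lceil>2 powr (real n * R)\<rceil>"

(* Joint distribution (M, S^n, Y^n, Z^n) induced by a code with causal CSI at the
   transmitter: encoder f i m (S_1..S_{i+1}) gives the (i+1)-th input (0-based index i). *)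
definition code_exp ::
  "'s pmf \<Rightarrow> ('x \<Rightarrow> 's \<Rightarrow> ('y \<times> 'z) pmf) \<Rightarrow> nat \<Rightarrow> nat \<Rightarrow>
   (nat \<Rightarrow> nat \<Rightarrow> 's list \<Rightarrow> 'x) \<Rightarrow> (nat \<times> 's list \<times> 'y list \<times> 'z list) pmf" where
  "code_exp QS W n N f =
     bind_pmf (pmf_of_set {0..<N}) (\<lambda>m.
     bind_pmf (iid_list QS n) (\<lambda>ss.
     bind_pmf (prod_pmf_list (map (\<lambda>i. W (f i m (take (Suc i) ss)) (ss ! i)) [0..<n])) (\<lambda>yz.
     return_pmf (m, ss, map fst yz, map snd yz))))"

definition err_prob ::
  "'s pmf \<Rightarrow> ('x \<Rightarrow> 's \<Rightarrow> ('y \<times> 'z) pmf) \<Rightarrow> nat \<Rightarrow> nat \<Rightarrow>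
   (nat \<Rightarrow> nat \<Rightarrow> 's list \<Rightarrow> 'x) \<Rightarrow> ('y list \<Rightarrow> nat) \<Rightarrow> real" where
  "err_prob QS W n N f g =
     measure_pmf.prob (code_exp QS W n N f) {(m, ss, ys, zs). g ys \<noteq> m}"

definition warden_dist ::
  "'s pmf \<Rightarrow> ('x \<Rightarrow> 's \<Rightarrow> ('y \<times> 'z) pmf) \<Rightarrow> nat \<Rightarrow> nat \<Rightarrow>
   (nat \<Rightarrow> nat \<Rightarrow> 's list \<Rightarrow> 'x) \<Rightarrow> 'z list pmf" where
  "warden_dist QS W n N f = map_pmf (\<lambda>(m, ss, ys, zs). zs) (code_exp QS W n N f)"

definition covert_achievable ::
  "'s pmf \<Rightarrow> ('x \<Rightarrow> 's \<Rightarrow> ('y \<times> 'z) pmf) \<Rightarrow> 'x \<Rightarrow> real \<Rightarrow> bool" where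
  "covert_achievable QS W x0 R \<longleftrightarrow>
     (\<exists>(f :: nat \<Rightarrow> nat \<Rightarrow> nat \<Rightarrow> 's list \<Rightarrow> 'x) (g :: nat \<Rightarrow> 'y list \<Rightarrow> nat).
        (\<lambda>n. err_prob QS W n (num_msgs n R) (f n) (g n)) \<longlonglongrightarrow> 0 \<and>
        (\<lambda>n. kl_div (warden_dist QS W n (num_msgs n R) (f n)) (iid_list (Q0 QS W x0) n))
           \<longlonglongrightarrow> 0)"

definition covert_capacity ::
  "'s pmf \<Rightarrow> ('x \<Rightarrow> 's \<Rightarrow> ('y \<times> 'z) pmf) \<Rightarrow> 'x \<Rightarrow> real" where
  "covert_capacity QS W x0 = Sup {R. covert_achievable QS W x0 R}"

definition aux_joint ::
  "'s pmf \<Rightarrow> ('x \<Rightarrow> 's \<Rightarrow> ('y \<times> 'z) pmf) \<Rightarrow> nat pmf \<Rightarrow> (nat \<Rightarrow> 's \<Rightarrow> 'x) \<Rightarrow>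
   ('s \<times> nat \<times> 'x \<times> 'y \<times> 'z) pmf" where
  "aux_joint QS W PU xf =
     bind_pmf QS (\<lambda>s. bind_pmf PU (\<lambda>u. bind_pmf (W (xf u s) s) (\<lambda>yz.
       return_pmf (s, u, xf u s, fst yz, snd yz))))"

(* the set \<D>: |U| \<le> |X|+1 is rendered as U taking values in {0..<|X|+1} *)
definition D_set ::
  "'s pmf \<Rightarrow> ('x::finite \<Rightarrow> 's \<Rightarrow> ('y \<times> 'z) pmf) \<Rightarrow> 'x \<Rightarrow>
   ('s \<times> nat \<times> 'x \<times> 'y \<times> 'z) pmf set" where
  "D_set QS W x0 = {P. \<exists>PU xf. set_pmf PU \<subseteq> {0..<CARD('x) + 1} \<and>
       P = aux_joint QS W PU xf \<and>
       map_pmf (\<lambda>(s, u, x, y, z). z) P = Q0 QS W x0 \<and>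
       mut_inf (map_pmf (\<lambda>(s, u, x, y, z). (u, y)) P) >
       mut_inf (map_pmf (\<lambda>(s, u, x, y, z). (u, z)) P)}"

definition rate_set ::
  "'s pmf \<Rightarrow> ('x::finite \<Rightarrow> 's \<Rightarrow> ('y \<times> 'z) pmf) \<Rightarrow> 'x \<Rightarrow> real set" where
  "rate_set QS W x0 = {R. R \<ge> 0 \<and> (\<exists>P \<in> D_set QS W x0.
       R \<le> mut_inf (map_pmf (\<lambda>(s, u, x, y, z). (u, y)) P))}"

end

theory Submission
  imports Defs
begin

text \<open>
  Achievability by random coding over Shannon strategies. Codewords \<open>u\<^sup>n\<close> are drawn i.i.d. from
  \<open>P_U\<close> and the encoder sends \<open>x(u_i, s_i)\<close>, using only the current state, so that \<open>U\<close> sees the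
  memoryless channel \<open>V(y, z | u) = \<Sum>s. Q_S(s) W(y, z | x(u, s), s)\<close> and the innocent output
  distribution \<open>Q_0\<close> is the output of \<open>V_Z\<close> under \<open>P_U\<close>. Decoding by thresholding the information
  density at \<open>n \<gamma>\<close> with \<open>R < \<gamma> < I(U;Y)\<close> gives expected error at most
  \<open>P[i(U\<^sup>n;Y\<^sup>n) \<le> n \<gamma>] + 2^(n (R - \<gamma>))\<close>. Jensen's inequality and
  \<open>log(1 + a) \<le> a^t / (t ln 2)\<close> bound the expected divergence of the warden's output from
  \<open>Q_0\<^sup>n\<close> by \<open>2^(-t n R) E[2^(t i(U;Z))]^n / (t ln 2)\<close>. Chernoff bounds make both terms
  exponentially small when \<open>I(U;Z) < R < I(U;Y)\<close>, and some codebook is no worse than the average.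
  A counting argument bounds every achievable rate by \<open>log |Y| + 1\<close>, so the capacity is a finite
  supremum, and it dominates every rate below \<open>I(U;Y)\<close>.
\<close>

section \<open>Expectations over finitely supported pmfs\<close>

lemma expectation_finite_pmf:
  fixes f :: "'a \<Rightarrow> real"
  assumes "finite (set_pmf M)"
  shows "measure_pmf.expectation M f = (\<Sum>a\<in>set_pmf M. pmf M a * f a)"
  using assms by (subst integral_measure_pmf_real[of "set_pmf M"]) (auto simp: mult.commute)

lemma expectation_bind_pmf_finite:
  fixes h :: "'b \<Rightarrow> real"
  assumes "finite (set_pmf p)" "\<And>x. x \<in> set_pmf p \<Longrightarrow> finite (set_pmf (f x))"
  shows "measure_pmf.expectation (bind_pmf p f) h =
    measure_pmf.expectation p (\<lambda>x. measure_pmf.expectation (f x) h)"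
  using assms by (subst pmf_expectation_bind[of "set_pmf p"]) (auto simp: integral_measure_pmf[of "set_pmf p"])

lemma prob_bind_pmf_finite:
  assumes "finite (set_pmf M)" "\<And>x. x \<in> set_pmf M \<Longrightarrow> finite (set_pmf (N x))"
  shows "measure_pmf.prob (bind_pmf M N) S = measure_pmf.expectation M (\<lambda>x. measure_pmf.prob (N x) S)"
  using expectation_bind_pmf_finite[OF assms, where h = "indicator S"] by simp

lemma prob_pair_pmf_finite:
  assumes "finite (set_pmf U)" "finite (set_pmf V)"
  shows "measure_pmf.prob (pair_pmf U V) S = measure_pmf.expectation U (\<lambda>u. measure_pmf.prob V {v. (u, v) \<in> S})"
proof -
  have "pair_pmf U V = bind_pmf U (\<lambda>u. map_pmf (Pair u) V)"
    by (simp add: pair_pmf_def map_pmf_def)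
  then show ?thesis using assms by (simp add: prob_bind_pmf_finite vimage_def)
qed

lemma expectation_mono_finite:
  fixes f g :: "'a \<Rightarrow> real"
  assumes "finite (set_pmf M)" "\<And>x. x \<in> set_pmf M \<Longrightarrow> f x \<le> g x"
  shows "measure_pmf.expectation M f \<le> measure_pmf.expectation M g"
  using assms by (simp add: expectation_finite_pmf sum_mono mult_left_mono)

lemma expectation_add_finite:
  fixes f g :: "'a \<Rightarrow> real"
  assumes "finite (set_pmf M)"
  shows "measure_pmf.expectation M (\<lambda>x. f x + g x) = measure_pmf.expectation M f + measure_pmf.expectation M g"
  using assms by (simp add: expectation_finite_pmf sum.distrib distrib_left)

lemma expectation_sum_finite:
  fixes f :: "'i \<Rightarrow> 'a \<Rightarrow> real"
  assumes "finite (set_pmf M)"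
  shows "measure_pmf.expectation M (\<lambda>x. \<Sum>i\<in>I. f i x) = (\<Sum>i\<in>I. measure_pmf.expectation M (f i))"
  using assms by (simp add: expectation_finite_pmf sum_distrib_left sum.swap[of _ I])

lemma expectation_affine_finite:
  fixes f :: "'a \<Rightarrow> real"
  assumes "finite (set_pmf M)"
  shows "measure_pmf.expectation M (\<lambda>x. (a + f x) / D) = (a + measure_pmf.expectation M f) / D"
  using assms by (simp add: expectation_finite_pmf sum_pmf_eq_1 add_divide_distrib distrib_left sum.distrib
     sum_distrib_right[symmetric] sum_divide_distrib[symmetric] times_divide_eq_right)

lemma expectation_swap_finite:
  fixes h :: "'a \<Rightarrow> 'b \<Rightarrow> real"
  assumes "finite (set_pmf p)" "finite (set_pmf q)"
  shows "measure_pmf.expectation p (\<lambda>x. measure_pmf.expectation q (\<lambda>y. h x y)) =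
         measure_pmf.expectation q (\<lambda>y. measure_pmf.expectation p (\<lambda>x. h x y))"
  using assms by (simp add: expectation_finite_pmf sum_distrib_left sum.swap[of _ "set_pmf p"] mult_ac)

lemma markov_inequality_finite:
  fixes f :: "'a \<Rightarrow> real"
  assumes fin: "finite (set_pmf M)" and ge: "\<And>x. x \<in> set_pmf M \<Longrightarrow> x \<in> S \<Longrightarrow> 1 \<le> f x"
    and nn: "\<And>x. x \<in> set_pmf M \<Longrightarrow> 0 \<le> f x"
  shows "measure_pmf.prob M S \<le> measure_pmf.expectation M f"
proof -
  have "measure_pmf.prob M S = measure_pmf.prob M (S \<inter> set_pmf M)" by (simp add: measure_Int_set_pmf)
  also have "\<dots> = (\<Sum>a\<in>S \<inter> set_pmf M. pmf M a)" using fin by (simp add: measure_measure_pmf_finite)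
  also have "\<dots> \<le> (\<Sum>a\<in>S \<inter> set_pmf M. pmf M a * f a)"
    using ge by (intro sum_mono) (metis IntD1 IntD2 mult.right_neutral mult_left_mono pmf_nonneg)
  also have "\<dots> \<le> (\<Sum>a\<in>set_pmf M. pmf M a * f a)"
    using fin nn by (intro sum_mono2) auto
  finally show ?thesis using expectation_finite_pmf[OF fin] by simp
qed

lemma exists_le_expectation:
  fixes f :: "'a \<Rightarrow> real"
  assumes fin: "finite (set_pmf M)"
  shows "\<exists>x\<in>set_pmf M. f x \<le> measure_pmf.expectation M f"
proof (rule ccontr)
  assume "\<not> ?thesis"
  then have lt: "\<And>x. x \<in> set_pmf M \<Longrightarrow> measure_pmf.expectation M f < f x" by force
  have "measure_pmf.expectation M f = (\<Sum>a\<in>set_pmf M. pmf M a * measure_pmf.expectation M f)"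
    using fin by (simp add: sum_distrib_right[symmetric] sum_pmf_eq_1)
  also have "\<dots> < (\<Sum>a\<in>set_pmf M. pmf M a * f a)"
    using fin set_pmf_not_empty[of M] lt
    by (intro sum_strict_mono) (auto intro!: mult_strict_left_mono simp: pmf_positive)
  finally show False using expectation_finite_pmf[OF fin, of f] by simp
qed

lemma prob_le_card: "finite S \<Longrightarrow> measure_pmf.prob M S \<le> real (card S)"
proof -
  assume f: "finite S"
  have "measure_pmf.prob M S = (\<Sum>a\<in>S. pmf M a)" using f by (simp add: measure_measure_pmf_finite)
  also have "\<dots> \<le> (\<Sum>a\<in>S. 1)" by (intro sum_mono) (simp add: pmf_le_1)
  finally show ?thesis by simp
qed

text \<open>Both Jensen's inequality for the logarithm and Gibbs' inequality reduce to \<open>ln x \<le> x - 1\<close>.\<close>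

lemma expectation_log_le_log_expectation:
  fixes X :: "'a \<Rightarrow> real"
  assumes fin: "finite (set_pmf M)" and pos: "\<And>x. x \<in> set_pmf M \<Longrightarrow> X x > 0"
  shows "measure_pmf.expectation M (\<lambda>x. log 2 (X x)) \<le> log 2 (measure_pmf.expectation M X)"
proof -
  let ?S = "set_pmf M"
  define \<mu> where "\<mu> = measure_pmf.expectation M X"
  have s1: "(\<Sum>a\<in>?S. pmf M a) = 1" using fin by (simp add: sum_pmf_eq_1)
  have \<mu>: "\<mu> = (\<Sum>a\<in>?S. pmf M a * X a)" using expectation_finite_pmf[OF fin] by (simp add: \<mu>_def)
  have "\<mu> > 0" unfolding \<mu> using fin set_pmf_not_empty[of M] pos
    by (intro sum_pos) (auto simp: pmf_positive)
  have "measure_pmf.expectation M (\<lambda>x. log 2 (X x)) - log 2 \<mu> = (\<Sum>a\<in>?S. pmf M a * log 2 (X a / \<mu>))"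
  proof -
    have "pmf M a * log 2 (X a / \<mu>) = pmf M a * log 2 (X a) - pmf M a * log 2 \<mu>" if "a \<in> ?S" for a
      using pos[OF that] \<open>\<mu> > 0\<close> by (simp add: log_divide right_diff_distrib)
    then show ?thesis using expectation_finite_pmf[OF fin] s1
      by (simp add: sum_subtractf sum_distrib_right[symmetric])
  qed
  also have "\<dots> \<le> (\<Sum>a\<in>?S. pmf M a * ((X a / \<mu> - 1) / ln 2))"
  proof (intro sum_mono mult_left_mono)
    fix a assume "a \<in> ?S"
    then have "X a / \<mu> > 0" using pos \<open>\<mu> > 0\<close> by auto
    then have "ln (X a / \<mu>) \<le> X a / \<mu> - 1" by (rule ln_le_minus_one)
    then show "log 2 (X a / \<mu>) \<le> (X a / \<mu> - 1) / ln 2" by (simp add: log_def divide_right_mono)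
  qed auto
  also have "\<dots> = ((\<Sum>a\<in>?S. pmf M a * X a) / \<mu> - (\<Sum>a\<in>?S. pmf M a)) / ln 2"
    by (simp add: sum_divide_distrib[symmetric] right_diff_distrib sum_subtractf
        sum_distrib_left[symmetric] field_simps)
  also have "\<dots> = 0" using \<mu> \<open>\<mu> > 0\<close> s1 by simp
  finally show ?thesis by (simp add: \<mu>_def)
qed

lemma kl_div_nonneg:
  assumes fin: "finite (set_pmf P)" and pos: "\<And>a. a \<in> set_pmf P \<Longrightarrow> pmf Q a > 0"
  shows "kl_div P Q \<ge> 0"
proof -
  let ?S = "set_pmf P"
  have "- kl_div P Q = (\<Sum>a\<in>?S. pmf P a * log 2 (pmf Q a / pmf P a))"
    unfolding kl_div_def
  proof (simp add: sum_negf[symmetric], intro sum.cong refl)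
    fix a assume "a \<in> ?S"
    then have "pmf P a > 0" "pmf Q a > 0" using pos by (auto simp: pmf_positive)
    then show "- (pmf P a * log 2 (pmf P a / pmf Q a)) = pmf P a * log 2 (pmf Q a / pmf P a)"
      by (simp add: log_divide algebra_simps)
  qed
  also have "\<dots> \<le> (\<Sum>a\<in>?S. pmf P a * ((pmf Q a / pmf P a - 1) / ln 2))"
  proof (intro sum_mono mult_left_mono)
    fix a assume "a \<in> ?S"
    then have "pmf Q a / pmf P a > 0" using pos by (auto simp: pmf_positive)
    then have "ln (pmf Q a / pmf P a) \<le> pmf Q a / pmf P a - 1" by (rule ln_le_minus_one)
    then show "log 2 (pmf Q a / pmf P a) \<le> (pmf Q a / pmf P a - 1) / ln 2"
      by (simp add: log_def divide_right_mono)
  qed auto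
  also have "\<dots> = ((\<Sum>a\<in>?S. pmf Q a) - (\<Sum>a\<in>?S. pmf P a)) / ln 2"
  proof -
    have "\<And>a. a \<in> ?S \<Longrightarrow> pmf P a * ((pmf Q a / pmf P a - 1) / ln 2) = (pmf Q a - pmf P a) / ln 2"
      by (simp add: field_simps set_pmf_iff)
    then show ?thesis by (simp add: sum_divide_distrib[symmetric] sum_subtractf)
  qed
  also have "\<dots> \<le> 0"
  proof -
    have "(\<Sum>a\<in>?S. pmf Q a) = measure_pmf.prob Q ?S" using fin by (simp add: measure_measure_pmf_finite)
    also have "\<dots> \<le> 1" by simp
    finally show ?thesis using fin by (simp add: sum_pmf_eq_1 divide_nonpos_pos)
  qed
  finally show ?thesis by simp
qed

lemma finite_set_Pi_pmf:
  "finite A \<Longrightarrow> (\<And>x. x \<in> A \<Longrightarrow> finite (set_pmf (p x))) \<Longrightarrow> finite (set_pmf (Pi_pmf A d p))"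
  by (auto simp: set_Pi_pmf)

lemma expectation_Pi_pmf_split:
  fixes G :: "_ \<Rightarrow> real"
  assumes A: "finite A" "m \<in> A" and fin: "\<And>x. x \<in> A \<Longrightarrow> finite (set_pmf (p x))"
  shows "measure_pmf.expectation (Pi_pmf A d p) G =
    measure_pmf.expectation (p m) (\<lambda>y. measure_pmf.expectation (Pi_pmf (A - {m}) d p) (\<lambda>f. G (f(m := y))))"
proof -
  have "Pi_pmf A d p = map_pmf (\<lambda>(y,f). f(m:=y)) (pair_pmf (p m) (Pi_pmf (A - {m}) d p))"
    using Pi_pmf_insert[of "A - {m}" m d p] A by (simp add: insert_absorb)
  moreover have "finite (set_pmf (Pi_pmf (A - {m}) d p))" "finite (set_pmf (p m))"
    using A fin by (auto intro: finite_set_Pi_pmf)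
  ultimately show ?thesis
    by (simp add: case_prod_unfold pair_pmf_def expectation_bind_pmf_finite)
qed

lemma expectation_Pi_pmf_component:
  fixes G :: "_ \<Rightarrow> real"
  assumes "finite A" "m \<in> A"
  shows "measure_pmf.expectation (Pi_pmf A d p) (\<lambda>f. G (f m)) = measure_pmf.expectation (p m) G"
proof -
  have "measure_pmf.expectation (Pi_pmf A d p) (\<lambda>f. G (f m)) =
      measure_pmf.expectation (map_pmf (\<lambda>f. f m) (Pi_pmf A d p)) G"
    by simp
  also have "\<dots> = measure_pmf.expectation (p m) G" using assms by (simp add: Pi_pmf_component)
  finally show ?thesis .
qed

section \<open>Finite products of pmfs\<close>

lemma iid_list_eq_prod_pmf_list: "iid_list p n = prod_pmf_list (replicate n p)"
  by (induction n) auto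

lemma set_prod_pmf_list: "set_pmf (prod_pmf_list ps) = {xs. list_all2 (\<lambda>p x. x \<in> set_pmf p) ps xs}"
  by (induction ps) (auto simp: list_all2_Cons1)

lemma finite_set_prod_pmf_list:
  assumes "\<And>p. p \<in> set ps \<Longrightarrow> finite (set_pmf p)"
  shows "finite (set_pmf (prod_pmf_list ps))"
  using assms
proof (induction ps)
  case (Cons p ps)
  have "set_pmf (prod_pmf_list (p # ps)) = (\<lambda>(x,xs). x # xs) ` (set_pmf p \<times> set_pmf (prod_pmf_list ps))"
    by (auto simp: image_iff)
  then show ?case using Cons by simp
qed simp

lemma length_of_set_prod_pmf_list: "xs \<in> set_pmf (prod_pmf_list ps) \<Longrightarrow> length xs = length ps"
  by (auto simp: set_prod_pmf_list dest: list_all2_lengthD)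

lemma pmf_prod_pmf_list_Cons: "pmf (prod_pmf_list (p # ps)) (x # xs) = pmf p x * pmf (prod_pmf_list ps) xs"
proof -
  have "prod_pmf_list (p # ps) = map_pmf (\<lambda>(x, xs). x # xs) (pair_pmf p (prod_pmf_list ps))"
    by (simp add: pair_pmf_def map_pmf_def bind_assoc_pmf bind_return_pmf)
  moreover have "inj (\<lambda>(x::'a, xs). x # xs)" by (auto simp: inj_def)
  ultimately show ?thesis
    using pmf_map_inj'[of "\<lambda>(x, xs). x # xs" "pair_pmf p (prod_pmf_list ps)" "(x, xs)"]
    by (simp add: pmf_pair)
qed

lemma pmf_prod_pmf_list:
  "length xs = length ps \<Longrightarrow> pmf (prod_pmf_list ps) xs = prod_list (map2 pmf ps xs)"
proof (induction ps arbitrary: xs)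
  case (Cons p ps)
  then obtain x xs' where "xs = x # xs'" "length xs' = length ps" by (cases xs) auto
  then show ?case using Cons.IH by (simp only: pmf_prod_pmf_list_Cons) simp
qed simp

lemma map_prod_pmf_list: "map_pmf (map h) (prod_pmf_list ps) = prod_pmf_list (map (map_pmf h) ps)"
proof (induction ps)
  case (Cons p ps)
  have "map_pmf (map h) (prod_pmf_list (p # ps)) =
    bind_pmf p (\<lambda>x. bind_pmf (map_pmf (map h) (prod_pmf_list ps)) (\<lambda>xs. return_pmf (h x # xs)))"
    by (simp add: map_pmf_def bind_assoc_pmf bind_return_pmf)
  also have "\<dots> = prod_pmf_list (map (map_pmf h) (p # ps))"
    by (simp only: list.map prod_pmf_list.simps Cons.IH[symmetric])
      (simp add: map_pmf_def bind_assoc_pmf bind_return_pmf)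
  finally show ?case .
qed simp

definition unzip :: "('a \<times> 'b) list \<Rightarrow> 'a list \<times> 'b list" where
  "unzip l = (map fst l, map snd l)"

lemma bind_prod_pmf_list_Pair:
  "bind_pmf (prod_pmf_list Ps) (\<lambda>us. map_pmf (Pair us) (prod_pmf_list (map K us))) =
   map_pmf unzip (prod_pmf_list (map (\<lambda>P. bind_pmf P (\<lambda>u. map_pmf (Pair u) (K u))) Ps))"
proof (induction Ps)
  case Nil then show ?case by (simp add: unzip_def bind_return_pmf)
next
  case (Cons P Ps)
  let ?R = "prod_pmf_list (map (\<lambda>P. bind_pmf P (\<lambda>u. map_pmf (Pair u) (K u))) Ps)"
  have "map_pmf unzip (prod_pmf_list (map (\<lambda>P. bind_pmf P (\<lambda>u. map_pmf (Pair u) (K u))) (P # Ps)))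
     = bind_pmf P (\<lambda>u. bind_pmf (K u) (\<lambda>y. bind_pmf (map_pmf unzip ?R) (\<lambda>(xs,ys). return_pmf (u#xs, y#ys))))"
    by (simp add: map_pmf_def bind_assoc_pmf bind_return_pmf unzip_def)
  also have "\<dots> = bind_pmf P (\<lambda>u. bind_pmf (K u) (\<lambda>y. bind_pmf (prod_pmf_list Ps) (\<lambda>xs.
       bind_pmf (prod_pmf_list (map K xs)) (\<lambda>ys. return_pmf (u#xs, y#ys)))))"
    by (simp only: Cons.IH[symmetric]) (simp add: map_pmf_def bind_assoc_pmf bind_return_pmf)
  also have "\<dots> = bind_pmf P (\<lambda>u. bind_pmf (prod_pmf_list Ps) (\<lambda>xs. bind_pmf (K u) (\<lambda>y.
       bind_pmf (prod_pmf_list (map K xs)) (\<lambda>ys. return_pmf (u#xs, y#ys)))))"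
    by (subst bind_commute_pmf) (rule refl)
  also have "\<dots> = bind_pmf (prod_pmf_list (P # Ps)) (\<lambda>us. map_pmf (Pair us) (prod_pmf_list (map K us)))"
    by (simp add: map_pmf_def bind_assoc_pmf bind_return_pmf)
  finally show ?case by simp
qed

lemma bind_prod_pmf_list:
  "bind_pmf (prod_pmf_list Ps) (\<lambda>us. prod_pmf_list (map K us)) = prod_pmf_list (map (\<lambda>P. bind_pmf P K) Ps)"
proof -
  have "bind_pmf (prod_pmf_list Ps) (\<lambda>us. prod_pmf_list (map K us)) =
    map_pmf snd (bind_pmf (prod_pmf_list Ps) (\<lambda>us. map_pmf (Pair us) (prod_pmf_list (map K us))))"
    by (simp add: map_bind_pmf pmf.map_comp o_def)
  also have "\<dots> = map_pmf (map snd) (prod_pmf_list (map (\<lambda>P. bind_pmf P (\<lambda>u. map_pmf (Pair u) (K u))) Ps))"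
    by (simp add: bind_prod_pmf_list_Pair pmf.map_comp o_def unzip_def)
  also have "\<dots> = prod_pmf_list (map (\<lambda>P. bind_pmf P K) Ps)"
    by (simp add: map_prod_pmf_list o_def map_bind_pmf pmf.map_comp)
  finally show ?thesis .
qed

lemma pair_prod_pmf_list:
  "length Ps = length Qs \<Longrightarrow>
   pair_pmf (prod_pmf_list Ps) (prod_pmf_list Qs) = map_pmf unzip (prod_pmf_list (map2 pair_pmf Ps Qs))"
proof (induction Ps Qs rule: list_induct2)
  case Nil then show ?case by (simp add: unzip_def pair_return_pmf1)
next
  case (Cons P Ps Q Qs)
  have "map_pmf unzip (prod_pmf_list (map2 pair_pmf (P#Ps) (Q#Qs))) =
     bind_pmf P (\<lambda>x. bind_pmf Q (\<lambda>y. bind_pmf (map_pmf unzip (prod_pmf_list (map2 pair_pmf Ps Qs)))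
       (\<lambda>(xs,ys). return_pmf (x#xs, y#ys))))"
    by (simp add: map_pmf_def bind_assoc_pmf bind_return_pmf unzip_def pair_pmf_def)
  also have "\<dots> = bind_pmf P (\<lambda>x. bind_pmf Q (\<lambda>y. bind_pmf (prod_pmf_list Ps) (\<lambda>xs.
       bind_pmf (prod_pmf_list Qs) (\<lambda>ys. return_pmf (x#xs, y#ys)))))"
    by (simp only: Cons.IH[symmetric]) (simp add: pair_pmf_def bind_assoc_pmf bind_return_pmf)
  also have "\<dots> = bind_pmf P (\<lambda>x. bind_pmf (prod_pmf_list Ps) (\<lambda>xs. bind_pmf Q (\<lambda>y.
       bind_pmf (prod_pmf_list Qs) (\<lambda>ys. return_pmf (x#xs, y#ys)))))"
    by (subst bind_commute_pmf) (rule refl)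
  also have "\<dots> = pair_pmf (prod_pmf_list (P#Ps)) (prod_pmf_list (Q#Qs))"
    by (simp add: pair_pmf_def bind_assoc_pmf bind_return_pmf)
  finally show ?case by simp
qed

lemma expectation_prod_pmf_list_prod_list:
  fixes g :: "'a \<Rightarrow> real"
  assumes "\<And>p. p \<in> set ps \<Longrightarrow> finite (set_pmf p)"
  shows "measure_pmf.expectation (prod_pmf_list ps) (\<lambda>l. prod_list (map g l)) =
    (\<Prod>p\<leftarrow>ps. measure_pmf.expectation p g)"
  using assms
proof (induction ps)
  case (Cons p ps)
  have "finite (set_pmf (prod_pmf_list ps))" using Cons by (intro finite_set_prod_pmf_list) auto
  then have "measure_pmf.expectation (prod_pmf_list (p # ps)) (\<lambda>l. prod_list (map g l)) =
    measure_pmf.expectation p (\<lambda>x. g x * measure_pmf.expectation (prod_pmf_list ps) (\<lambda>xs. prod_list (map g xs)))"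
    using Cons by (simp add: expectation_bind_pmf_finite)
  then show ?case using Cons by simp
qed simp

lemma set_pmf_iid_listD: "l \<in> set_pmf (iid_list p n) \<Longrightarrow> set l \<subseteq> set_pmf p \<and> length l = n"
  by (auto simp: iid_list_eq_prod_pmf_list set_prod_pmf_list list_all2_conv_all_nth in_set_conv_nth)

lemma finite_set_iid_list: "finite (set_pmf p) \<Longrightarrow> finite (set_pmf (iid_list p n))"
  unfolding iid_list_eq_prod_pmf_list by (rule finite_set_prod_pmf_list) auto

lemma expectation_iid_list_prod_list:
  fixes g :: "'a \<Rightarrow> real"
  assumes "finite (set_pmf p)"
  shows "measure_pmf.expectation (iid_list p n) (\<lambda>l. prod_list (map g l)) = measure_pmf.expectation p g ^ n"
  unfolding iid_list_eq_prod_pmf_list using assms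
  by (subst expectation_prod_pmf_list_prod_list) (auto simp: prod_list_replicate)

lemma pmf_iid_list_pos:
  assumes "\<And>z. pmf Q z > 0" "length zs = n"
  shows "pmf (iid_list Q n) zs > 0"
  using assms(2)
proof (induction zs arbitrary: n)
  case (Cons z zs)
  then obtain m where m: "n = Suc m" "length zs = m" by auto
  have "pmf (iid_list Q n) (z # zs) = pmf Q z * pmf (iid_list Q m) zs"
    unfolding m(1) iid_list_eq_prod_pmf_list replicate_Suc by (rule pmf_prod_pmf_list_Cons)
  then show ?case using Cons.IH[OF m(2)] assms(1) by simp
qed (simp add: iid_list_eq_prod_pmf_list)

lemma pair_iid_list: "pair_pmf (iid_list A n) (iid_list B n) = map_pmf unzip (iid_list (pair_pmf A B) n)"
  unfolding iid_list_eq_prod_pmf_list by (simp add: pair_prod_pmf_list zip_replicate)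

lemma bind_iid_list_map2:
  "length us = n \<Longrightarrow> bind_pmf (iid_list QS n) (\<lambda>ss. prod_pmf_list (map2 F us ss)) =
    prod_pmf_list (map (\<lambda>u. bind_pmf QS (F u)) us)"
proof (induction us arbitrary: n)
  case Nil then show ?case by (simp add: bind_return_pmf)
next
  case (Cons u us)
  then obtain n' where n: "n = Suc n'" "length us = n'" by (cases n) auto
  have "bind_pmf (iid_list QS n) (\<lambda>ss. prod_pmf_list (map2 F (u#us) ss)) =
     bind_pmf QS (\<lambda>s. bind_pmf (F u s) (\<lambda>y. bind_pmf (bind_pmf (iid_list QS n')
       (\<lambda>ss. prod_pmf_list (map2 F us ss))) (\<lambda>ys. return_pmf (y#ys))))"
    unfolding n by (simp add: bind_assoc_pmf bind_return_pmf) (subst bind_commute_pmf, rule refl)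
  also have "\<dots> = prod_pmf_list (map (\<lambda>u. bind_pmf QS (F u)) (u#us))"
    using Cons n by (simp add: bind_assoc_pmf)
  finally show ?case .
qed

section \<open>Real-analytic estimates\<close>

lemma log_one_plus_le_powr:
  fixes a t :: real
  assumes a: "a \<ge> 0" and t: "0 < t" "t \<le> 1"
  shows "log 2 (1 + a) \<le> a powr t / (t * ln 2)"
proof -
  have "ln (1 + a) \<le> a powr t / t"
  proof (cases "a \<le> 1")
    case True
    have "ln (1 + a) \<le> a" using a by (intro ln_add_one_self_le_self)
    also have "a \<le> a powr t"
      using True a t powr_mono'[of t 1 a] by (cases "a = 0") simp_all
    also have "\<dots> \<le> a powr t / t" using t by (simp add: le_divide_eq mult_left_le)
    finally show ?thesis .
  next
    case False
    then have a1: "a > 1" by simp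
    have "t * ln a = ln (a powr t)" using a1 by (simp add: ln_powr)
    also have "\<dots> \<le> a powr t - 1" using a1 by (intro ln_le_minus_one) simp
    finally have "ln a \<le> (a powr t - 1) / t" using t by (simp add: le_divide_eq mult.commute)
    moreover have "ln 2 \<le> 1 / t" using t ln_2_less_1 by (smt (verit) le_divide_eq_1)
    moreover have "ln (1 + a) \<le> ln 2 + ln a"
    proof -
      have "ln (1 + a) \<le> ln (2 * a)" using a1 by simp
      then show ?thesis using a1 by (simp add: ln_mult)
    qed
    ultimately show ?thesis by (simp add: diff_divide_distrib)
  qed
  then show ?thesis by (simp add: log_def divide_right_mono field_simps)
qed

text \<open>Chernoff exponents: the derivative at \<open>t = 0\<close> of \<open>\<Sum>a\<in>A. p a * \<rho> a powr t\<close> is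
  \<open>ln 2\<close> times the mean of \<open>log 2 \<rho>\<close>, so the moment beats \<open>2 powr (t * r)\<close> for small \<open>t\<close>.\<close>

lemma moment_powr_lt_of_mean_log_lt:
  fixes p \<rho> :: "'a \<Rightarrow> real"
  assumes p1: "sum p A = 1" and pos: "\<And>a. a \<in> A \<Longrightarrow> \<rho> a > 0"
    and lt: "(\<Sum>a\<in>A. p a * log 2 (\<rho> a)) < r"
  shows "\<exists>t>0. t \<le> 1 \<and> (\<Sum>a\<in>A. p a * \<rho> a powr t) < 2 powr (t * r)"
proof -
  define \<phi> where "\<phi> t = (\<Sum>a\<in>A. p a * exp (t * ln (\<rho> a))) - exp (t * (r * ln 2))" for t
  have d: "DERIV \<phi> 0 :> (\<Sum>a\<in>A. p a * ln (\<rho> a)) - r * ln 2"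
    unfolding \<phi>_def by (auto intro!: derivative_eq_intros simp: mult.commute)
  have "(\<Sum>a\<in>A. p a * ln (\<rho> a)) = ln 2 * (\<Sum>a\<in>A. p a * log 2 (\<rho> a))"
    by (simp add: log_def sum_distrib_left field_simps)
  also have "\<dots> < ln 2 * r" using lt by simp
  finally have neg: "(\<Sum>a\<in>A. p a * ln (\<rho> a)) - r * ln 2 < 0" by (simp add: mult.commute)
  obtain d where d0: "d > 0" and dd: "\<And>h. h > 0 \<Longrightarrow> h < d \<Longrightarrow> \<phi> 0 > \<phi> (0 + h)"
    using DERIV_neg_dec_right[OF d neg] by blast
  define t where "t = min (d/2) 1"
  have t: "t > 0" "t < d" "t \<le> 1" using d0 by (auto simp: t_def)
  have "\<phi> 0 = 0" using p1 by (simp add: \<phi>_def)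
  then have "\<phi> t < 0" using dd[of t] t by simp
  moreover have "p a * \<rho> a powr t = p a * exp (t * ln (\<rho> a))" if "a \<in> A" for a
    using pos[OF that] by (simp add: powr_def mult.commute)
  then have "(\<Sum>a\<in>A. p a * \<rho> a powr t) = (\<Sum>a\<in>A. p a * exp (t * ln (\<rho> a)))"
    by (rule sum.cong[OF refl])
  moreover have "2 powr (t * r) = exp (t * (r * ln 2))" by (simp add: powr_def mult_ac)
  ultimately show ?thesis using t unfolding \<phi>_def by auto
qed

lemma moment_powr_neg_lt_of_mean_log_gt:
  fixes p \<rho> :: "'a \<Rightarrow> real"
  assumes p1: "sum p A = 1" and pos: "\<And>a. a \<in> A \<Longrightarrow> \<rho> a > 0"
    and gt: "r < (\<Sum>a\<in>A. p a * log 2 (\<rho> a))"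
  shows "\<exists>t>0. (\<Sum>a\<in>A. p a * \<rho> a powr (-t)) < 2 powr (-t * r)"
proof -
  have "p a * log 2 (1 / \<rho> a) = - (p a * log 2 (\<rho> a))" if "a \<in> A" for a
    using pos[OF that] by (simp add: log_divide)
  then have "(\<Sum>a\<in>A. p a * log 2 (1 / \<rho> a)) = - (\<Sum>a\<in>A. p a * log 2 (\<rho> a))"
    by (simp add: sum_negf[symmetric])
  with gt have "(\<Sum>a\<in>A. p a * log 2 (1 / \<rho> a)) < -r" by simp
  from moment_powr_lt_of_mean_log_lt[OF p1 _ this] pos obtain t where t: "t > 0"
    "(\<Sum>a\<in>A. p a * (1 / \<rho> a) powr t) < 2 powr (t * - r)" by force
  moreover have "(\<Sum>a\<in>A. p a * (1 / \<rho> a) powr t) = (\<Sum>a\<in>A. p a * \<rho> a powr (-t))"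
    using pos by (intro sum.cong refl) (simp add: powr_divide powr_minus_divide)
  ultimately show ?thesis by (intro exI[of _ t]) auto
qed

lemma prod_list_powr:
  assumes "\<And>a. f a \<ge> 0"
  shows "prod_list (map (\<lambda>a. f a powr t) l) = prod_list (map f l) powr (t::real)"
proof (induction l)
  case (Cons a l)
  have "prod_list (map f l) \<ge> 0" using assms by (induction l) auto
  then show ?case using Cons assms by (simp add: powr_mult)
qed simp

lemma num_msgs_ge: "real (num_msgs n R) \<ge> 2 powr (real n * R)"
  unfolding num_msgs_def by (rule real_nat_ceiling_ge)

lemma num_msgs_pos: "num_msgs n R > 0"
  using num_msgs_ge[of n R] powr_gt_zero[of 2 "real n * R"] by linarith

lemma num_msgs_le: "real (num_msgs n R) - 1 \<le> 2 powr (real n * R)"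
  using of_int_ceiling_le_add_one[of "2 powr (real n * R)"] unfolding num_msgs_def by simp

lemma geometric_tendsto_zero_powr:
  fixes t \<gamma> h :: real
  assumes "0 \<le> h" "h < 2 powr (-t * \<gamma>)"
  shows "(\<lambda>n. (2 powr (real n * \<gamma>)) powr t * h ^ n) \<longlonglongrightarrow> 0"
proof -
  have "2 powr (\<gamma> * t) * h < 2 powr (\<gamma> * t) * 2 powr (-t * \<gamma>)" using assms by simp
  also have "\<dots> = 1" by (simp add: powr_add[symmetric])
  finally have "(\<lambda>n. (2 powr (\<gamma> * t) * h) ^ n) \<longlonglongrightarrow> 0"
    using assms by (intro LIMSEQ_power_zero) simp
  then show ?thesis by (simp add: powr_powr power_mult_distrib mult_ac powr_power)
qed

lemma num_msgs_div_tendsto_zero: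
  assumes "R < \<gamma>"
  shows "(\<lambda>n. (real (num_msgs n R) - 1) / 2 powr (real n * \<gamma>)) \<longlonglongrightarrow> 0"
proof (rule Lim_null_comparison)
  have "(2::real) powr (R - \<gamma>) < 1" using assms by (simp add: powr_less_one)
  then show "(\<lambda>n. (2 powr (R - \<gamma>)) ^ n) \<longlonglongrightarrow> 0" by (intro LIMSEQ_power_zero) simp
  have "norm ((real (num_msgs n R) - 1) / 2 powr (real n * \<gamma>)) \<le> 2 powr (real n * R) / 2 powr (real n * \<gamma>)" for n
    using num_msgs_le[of n R] num_msgs_pos[of n R] by (auto intro!: divide_right_mono)
  then show "\<forall>\<^sub>F n in sequentially. norm ((real (num_msgs n R) - 1) / 2 powr (real n * \<gamma>)) \<le> (2 powr (R - \<gamma>)) ^ n"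
    by (simp add: powr_power powr_diff[symmetric] right_diff_distrib)
qed

lemma num_msgs_powr_tendsto_zero:
  fixes t h :: real
  assumes t: "t > 0" and h: "0 \<le> h" "h < 2 powr (t * R)"
  shows "(\<lambda>n. real (num_msgs n R) powr (-t) * h ^ n) \<longlonglongrightarrow> 0"
proof (rule Lim_null_comparison)
  have "2 powr (-t * R) * h < 2 powr (-t * R) * 2 powr (t * R)" using h by simp
  also have "\<dots> = 1" by (simp add: powr_add[symmetric])
  finally show "(\<lambda>n. (2 powr (-t * R) * h) ^ n) \<longlonglongrightarrow> 0" using h by (intro LIMSEQ_power_zero) simp
  have "real (num_msgs n R) powr (-t) * h ^ n \<le> (2 powr (real n * R)) powr (-t) * h ^ n" for n
    using t h num_msgs_ge[of n R] by (intro mult_right_mono powr_mono2') auto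
  also have "(2 powr (real n * R)) powr (-t) * h ^ n = (2 powr (-t * R) * h) ^ n" for n
    by (simp add: powr_powr power_mult_distrib powr_power mult_ac)
  finally have "real (num_msgs n R) powr (-t) * h ^ n \<le> (2 powr (-t * R) * h) ^ n" for n .
  then show "\<forall>\<^sub>F n in sequentially. norm (real (num_msgs n R) powr (-t) * h ^ n) \<le> (2 powr (-t * R) * h) ^ n"
    using h by simp
qed

lemma random_coding_bound_tendsto_zero:
  fixes t1 t2 \<gamma> h1 h2 :: real
  assumes t2: "t2 > 0" and h1: "0 \<le> h1" "h1 < 2 powr (-t1 * \<gamma>)"
    and h2: "0 \<le> h2" "h2 < 2 powr (t2 * R)" and R: "R < \<gamma>"
  shows "(\<lambda>n. (2 powr (real n * \<gamma>)) powr t1 * h1 ^ n + (real (num_msgs n R) - 1) / 2 powr (real n * \<gamma>)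
     + real (num_msgs n R) powr (-t2) / (t2 * ln 2) * h2 ^ n) \<longlonglongrightarrow> 0"
proof -
  have "(\<lambda>n. 1 / (t2 * ln 2) * (real (num_msgs n R) powr (-t2) * h2 ^ n)) \<longlonglongrightarrow> 0"
    using t2 h2 by (intro tendsto_mult_right_zero num_msgs_powr_tendsto_zero)
  then show ?thesis
    using geometric_tendsto_zero_powr[OF h1] num_msgs_div_tendsto_zero[OF R] by (intro tendsto_add_zero) simp_all
qed

section \<open>Information density\<close>

text \<open>\<open>info_ratio J\<close> is \<open>2\<close> to the power of the information density of the joint pmf \<open>J\<close>.\<close>

definition info_ratio :: "('a \<times> 'b) pmf \<Rightarrow> 'a \<times> 'b \<Rightarrow> real" where
  "info_ratio J ab = pmf J ab / (pmf (map_pmf fst J) (fst ab) * pmf (map_pmf snd J) (snd ab))"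

definition info_ratio_list :: "('a \<times> 'b) pmf \<Rightarrow> ('a \<times> 'b) list \<Rightarrow> real" where
  "info_ratio_list J l = prod_list (map (info_ratio J) l)"

definition info_moment :: "('a \<times> 'b) pmf \<Rightarrow> real \<Rightarrow> real" where
  "info_moment J t = measure_pmf.expectation J (\<lambda>ab. info_ratio J ab powr t)"

lemma info_ratio_nonneg: "info_ratio J ab \<ge> 0"
  by (simp add: info_ratio_def)

lemma info_ratio_pos: "ab \<in> set_pmf J \<Longrightarrow> info_ratio J ab > 0"
  by (auto simp: info_ratio_def pmf_positive)

lemma info_ratio_list_nonneg: "info_ratio_list J l \<ge> 0"
  unfolding info_ratio_list_def by (induction l) (auto simp: info_ratio_nonneg)

lemma info_ratio_list_pos: "set l \<subseteq> set_pmf J \<Longrightarrow> info_ratio_list J l > 0"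
  unfolding info_ratio_list_def by (induction l) (auto simp: info_ratio_pos)

lemma mut_inf_eq_info_ratio: "mut_inf J = (\<Sum>ab\<in>set_pmf J. pmf J ab * log 2 (info_ratio J ab))"
  by (simp add: mut_inf_def info_ratio_def)

lemma info_moment_eq_sum:
  "finite (set_pmf J) \<Longrightarrow> info_moment J t = (\<Sum>ab\<in>set_pmf J. pmf J ab * info_ratio J ab powr t)"
  by (simp add: info_moment_def expectation_finite_pmf)

lemma info_moment_nonneg: "finite (set_pmf J) \<Longrightarrow> info_moment J t \<ge> 0"
  by (simp add: info_moment_eq_sum sum_nonneg)

lemma info_moment_lt_of_mut_inf_lt:
  assumes "finite (set_pmf J)" "mut_inf J < r"
  shows "\<exists>t>0. t \<le> 1 \<and> info_moment J t < 2 powr (t * r)"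
  using moment_powr_lt_of_mean_log_lt[of "pmf J" "set_pmf J" "info_ratio J" r] assms
  by (simp add: sum_pmf_eq_1 info_ratio_pos mut_inf_eq_info_ratio info_moment_eq_sum)

lemma info_moment_neg_lt_of_mut_inf_gt:
  assumes "finite (set_pmf J)" "r < mut_inf J"
  shows "\<exists>t>0. info_moment J (-t) < 2 powr (-t * r)"
  using moment_powr_neg_lt_of_mean_log_gt[of "pmf J" "set_pmf J" "info_ratio J" r] assms
  by (simp add: sum_pmf_eq_1 info_ratio_pos mut_inf_eq_info_ratio info_moment_eq_sum)

lemma expectation_info_ratio_list_powr:
  assumes "finite (set_pmf J)"
  shows "measure_pmf.expectation (iid_list J n) (\<lambda>l. info_ratio_list J l powr t) = info_moment J t ^ n"
  using assms
  by (simp add: info_ratio_list_def prod_list_powr info_ratio_nonneg expectation_iid_list_prod_list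
      info_moment_def flip: prod_list_powr)

lemma prob_info_ratio_list_le:
  assumes fin: "finite (set_pmf J)" and T: "T > 0" and t: "t > 0"
  shows "measure_pmf.prob (iid_list J n) {l. info_ratio_list J l \<le> T} \<le> T powr t * info_moment J (-t) ^ n"
proof -
  have "measure_pmf.prob (iid_list J n) {l. info_ratio_list J l \<le> T} \<le>
        measure_pmf.expectation (iid_list J n) (\<lambda>l. T powr t * info_ratio_list J l powr (-t))"
  proof (rule markov_inequality_finite[OF finite_set_iid_list[OF fin]])
    fix l assume l: "l \<in> set_pmf (iid_list J n)" "l \<in> {l. info_ratio_list J l \<le> T}"
    then have p: "info_ratio_list J l > 0" using set_pmf_iid_listD info_ratio_list_pos by blast
    have "T powr (-t) \<le> info_ratio_list J l powr (-t)"
      using l p t by (intro powr_mono2') auto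
    then have "T powr t * T powr (-t) \<le> T powr t * info_ratio_list J l powr (-t)"
      by (rule mult_left_mono) simp
    then show "1 \<le> T powr t * info_ratio_list J l powr (-t)" using T by (simp add: powr_minus field_simps)
  qed simp
  also have "\<dots> = T powr t * info_moment J (-t) ^ n" using expectation_info_ratio_list_powr[OF fin] by simp
  finally show ?thesis .
qed

lemma expectation_info_ratio_list_indep_le:
  assumes fin: "finite (set_pmf J)"
  shows "measure_pmf.expectation (iid_list (pair_pmf (map_pmf fst J) (map_pmf snd J)) n) (info_ratio_list J) \<le> 1"
proof -
  let ?P = "pair_pmf (map_pmf fst J) (map_pmf snd J)"
  have finP: "finite (set_pmf ?P)" using fin by (simp add: set_pair_pmf)
  have "pmf ?P ab * info_ratio J ab = pmf J ab" if "ab \<in> set_pmf ?P" for ab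
  proof -
    have "pmf (map_pmf fst J) (fst ab) > 0" "pmf (map_pmf snd J) (snd ab) > 0"
      using that unfolding set_pair_pmf by (auto simp del: set_map_pmf simp: pmf_positive)
    then show ?thesis by (cases ab) (simp add: pmf_pair info_ratio_def)
  qed
  then have "measure_pmf.expectation ?P (info_ratio J) = measure_pmf.prob J (set_pmf ?P)"
    using finP by (simp add: expectation_finite_pmf measure_measure_pmf_finite)
  then have "measure_pmf.expectation ?P (info_ratio J) \<le> 1" by simp
  moreover have "measure_pmf.expectation ?P (info_ratio J) \<ge> 0"
    by (simp add: integral_nonneg_AE info_ratio_nonneg)
  ultimately show ?thesis
    unfolding info_ratio_list_def using finP by (simp add: expectation_iid_list_prod_list power_le_one)
qed

section \<open>Random codes for a memoryless channel\<close>

definition joint_pmf :: "'a pmf \<Rightarrow> ('a \<Rightarrow> 'b pmf) \<Rightarrow> ('a \<times> 'b) pmf" where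
  "joint_pmf PU K = bind_pmf PU (\<lambda>u. map_pmf (Pair u) (K u))"

definition channel_out :: "('a \<Rightarrow> 'b pmf) \<Rightarrow> 'a list \<Rightarrow> 'b list pmf" where
  "channel_out K us = prod_pmf_list (map K us)"

definition random_codebook :: "'a pmf \<Rightarrow> nat \<Rightarrow> nat \<Rightarrow> (nat \<Rightarrow> 'a list) pmf" where
  "random_codebook PU n N = Pi_pmf {0..<N} [] (\<lambda>_. iid_list PU n)"

definition threshold_decoder ::
  "('a \<times> 'b) pmf \<Rightarrow> real \<Rightarrow> nat \<Rightarrow> (nat \<Rightarrow> 'a list) \<Rightarrow> 'b list \<Rightarrow> nat" where
  "threshold_decoder J T N cb ys =
     (if \<exists>m<N. T < info_ratio_list J (zip (cb m) ys)
      then LEAST m. m < N \<and> T < info_ratio_list J (zip (cb m) ys) else 0)"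

definition threshold_error ::
  "('a \<times> 'b) pmf \<Rightarrow> ('a \<Rightarrow> 'b pmf) \<Rightarrow> real \<Rightarrow> nat \<Rightarrow> (nat \<Rightarrow> 'a list) \<Rightarrow> real" where
  "threshold_error J K T N cb =
     (\<Sum>m<N. measure_pmf.prob (channel_out K (cb m)) {ys. threshold_decoder J T N cb ys \<noteq> m}) / N"

lemma joint_pmf_fst: "map_pmf fst (joint_pmf PU K) = PU"
  by (simp add: joint_pmf_def map_bind_pmf pmf.map_comp o_def map_pmf_const bind_return_pmf')

lemma joint_pmf_snd: "map_pmf snd (joint_pmf PU K) = bind_pmf PU K"
  by (simp add: joint_pmf_def map_bind_pmf pmf.map_comp o_def)

lemma finite_set_joint_pmf:
  "finite (set_pmf PU) \<Longrightarrow> (\<And>u. finite (set_pmf (K u))) \<Longrightarrow> finite (set_pmf (joint_pmf PU K))"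
  by (auto simp: joint_pmf_def)

lemma pmf_joint_pmf: "pmf (joint_pmf PU K) (u, z) = pmf PU u * pmf (K u) z"
proof -
  have "pmf (map_pmf (Pair u') (K u')) (u, z) = indicator {u} u' * pmf (K u) z" for u'
  proof (cases "u' = u")
    case True
    then show ?thesis using pmf_map_inj'[of "Pair u" "K u" z] by (simp add: inj_def)
  next
    case False
    then have "(u, z) \<notin> set_pmf (map_pmf (Pair u') (K u'))" by auto
    then show ?thesis using False by (simp add: set_pmf_eq)
  qed
  then show ?thesis by (simp add: joint_pmf_def pmf_bind measure_pmf_single)
qed

lemma finite_set_channel_out: "(\<And>u. finite (set_pmf (K u))) \<Longrightarrow> finite (set_pmf (channel_out K us))"
  unfolding channel_out_def by (rule finite_set_prod_pmf_list) auto

lemma length_of_set_channel_out: "z \<in> set_pmf (channel_out K us) \<Longrightarrow> length z = length us"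
  unfolding channel_out_def by (drule length_of_set_prod_pmf_list) simp

lemma bind_iid_list_channel_out_Pair:
  "bind_pmf (iid_list PU n) (\<lambda>us. map_pmf (Pair us) (channel_out K us)) = map_pmf unzip (iid_list (joint_pmf PU K) n)"
  unfolding iid_list_eq_prod_pmf_list channel_out_def joint_pmf_def by (simp add: bind_prod_pmf_list_Pair)

lemma bind_iid_list_channel_out: "bind_pmf (iid_list PU n) (channel_out K) = iid_list (bind_pmf PU K) n"
  unfolding iid_list_eq_prod_pmf_list channel_out_def using bind_prod_pmf_list[of "replicate n PU" K] by simp

lemma finite_set_random_codebook: "finite (set_pmf PU) \<Longrightarrow> finite (set_pmf (random_codebook PU n N))"
  unfolding random_codebook_def by (intro finite_set_Pi_pmf finite_set_iid_list) auto

lemma length_of_set_random_codebook: "cb \<in> set_pmf (random_codebook PU n N) \<Longrightarrow> m < N \<Longrightarrow> length (cb m) = n"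
  using set_pmf_iid_listD[of "cb m" PU n] by (auto simp: random_codebook_def set_Pi_pmf PiE_dflt_def)

lemma ratio_channel_out_eq_info_ratio_list:
  assumes l: "l \<in> set_pmf (iid_list (joint_pmf PU K) n)"
  shows "pmf (channel_out K (map fst l)) (map snd l) / pmf (iid_list (bind_pmf PU K) n) (map snd l) =
    info_ratio_list (joint_pmf PU K) l"
proof -
  from set_pmf_iid_listD[OF l] have sl: "set l \<subseteq> set_pmf (joint_pmf PU K)" and ln: "length l = n" by auto
  have "info_ratio (joint_pmf PU K) ab = pmf (K (fst ab)) (snd ab) / pmf (bind_pmf PU K) (snd ab)"
    if ab: "ab \<in> set_pmf (joint_pmf PU K)" for ab
  proof -
    have "fst ab \<in> set_pmf (map_pmf fst (joint_pmf PU K))" using ab by simp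
    then have "pmf PU (fst ab) > 0" by (simp add: joint_pmf_fst pmf_positive)
    then show ?thesis by (cases ab) (simp add: info_ratio_def pmf_joint_pmf joint_pmf_fst joint_pmf_snd)
  qed
  with sl have "info_ratio_list (joint_pmf PU K) l =
      prod_list (map (\<lambda>ab. pmf (K (fst ab)) (snd ab) / pmf (bind_pmf PU K) (snd ab)) l)"
    unfolding info_ratio_list_def by (intro arg_cong[where f=prod_list] map_cong) auto
  also have "\<dots> = prod_list (map2 pmf (map K (map fst l)) (map snd l)) /
      prod_list (map2 pmf (replicate (length l) (bind_pmf PU K)) (map snd l))"
    by (induction l) (auto simp: field_simps)
  also have "\<dots> = pmf (channel_out K (map fst l)) (map snd l) / pmf (iid_list (bind_pmf PU K) n) (map snd l)"
    unfolding channel_out_def iid_list_eq_prod_pmf_list using ln by (simp add: pmf_prod_pmf_list)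
  finally show ?thesis by simp
qed

lemma expectation_prob_channel_out:
  assumes "finite (set_pmf PU)" "\<And>u. finite (set_pmf (K u))"
  shows "measure_pmf.expectation (iid_list PU n) (\<lambda>us. measure_pmf.prob (channel_out K us) {ys. P (zip us ys)}) =
    measure_pmf.prob (iid_list (joint_pmf PU K) n) {l. P l}"
proof -
  have "measure_pmf.expectation (iid_list PU n) (\<lambda>us. measure_pmf.prob (channel_out K us) {ys. P (zip us ys)}) =
    measure_pmf.expectation (iid_list PU n)
      (\<lambda>us. measure_pmf.prob (map_pmf (Pair us) (channel_out K us)) {(a, b). P (zip a b)})"
    by (simp add: vimage_def)
  also have "\<dots> = measure_pmf.prob (bind_pmf (iid_list PU n) (\<lambda>us. map_pmf (Pair us) (channel_out K us)))
      {(a, b). P (zip a b)}"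
    using assms by (subst prob_bind_pmf_finite) (auto intro: finite_set_iid_list finite_set_channel_out)
  also have "\<dots> = measure_pmf.prob (iid_list (joint_pmf PU K) n) {l. P l}"
    unfolding bind_iid_list_channel_out_Pair by (simp add: vimage_def unzip_def case_prod_unfold zip_map_fst_snd)
  finally show ?thesis .
qed

lemma expectation_prob_info_ratio_list_indep_gt:
  assumes fPU: "finite (set_pmf PU)" and fK: "\<And>u. finite (set_pmf (K u))" and T: "T > 0"
  shows "measure_pmf.expectation (iid_list PU n) (\<lambda>us. measure_pmf.expectation (iid_list PU n)
      (\<lambda>us'. measure_pmf.prob (channel_out K us) {ys. T < info_ratio_list (joint_pmf PU K) (zip us' ys)})) \<le> 1 / T"
proof -
  define J where "J = joint_pmf PU K"
  define U where "U = iid_list PU n"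
  define Y where "Y = iid_list (bind_pmf PU K) n"
  have fU: "finite (set_pmf U)" unfolding U_def using fPU by (rule finite_set_iid_list)
  have fY: "finite (set_pmf Y)" unfolding Y_def using fPU fK by (intro finite_set_iid_list) auto
  have fJ: "finite (set_pmf J)" unfolding J_def using fPU fK by (rule finite_set_joint_pmf)
  have "measure_pmf.expectation U (\<lambda>us. measure_pmf.expectation U
      (\<lambda>us'. measure_pmf.prob (channel_out K us) {ys. T < info_ratio_list J (zip us' ys)}))
    = measure_pmf.expectation U (\<lambda>us'. measure_pmf.expectation U
      (\<lambda>us. measure_pmf.prob (channel_out K us) {ys. T < info_ratio_list J (zip us' ys)}))"
    using fU by (intro expectation_swap_finite)
  also have "\<dots> = measure_pmf.expectation U (\<lambda>us'. measure_pmf.prob Y {ys. T < info_ratio_list J (zip us' ys)})"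
    using fU fK by (simp add: prob_bind_pmf_finite[symmetric] finite_set_channel_out U_def Y_def
        bind_iid_list_channel_out)
  also have "\<dots> = measure_pmf.prob (pair_pmf U Y) {(a, b). T < info_ratio_list J (zip a b)}"
    using fU fY by (simp add: prob_pair_pmf_finite)
  also have "\<dots> = measure_pmf.prob (iid_list (pair_pmf (map_pmf fst J) (map_pmf snd J)) n)
      {l. T < info_ratio_list J l}"
    unfolding U_def Y_def J_def joint_pmf_fst joint_pmf_snd pair_iid_list
    by (simp add: vimage_def unzip_def case_prod_unfold zip_map_fst_snd)
  also have "\<dots> \<le> measure_pmf.expectation (iid_list (pair_pmf (map_pmf fst J) (map_pmf snd J)) n)
      (\<lambda>l. info_ratio_list J l / T)"
    using fJ T by (intro markov_inequality_finite finite_set_iid_list)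
      (auto simp: set_pair_pmf info_ratio_list_nonneg)
  also have "\<dots> \<le> 1 / T"
    using expectation_info_ratio_list_indep_le[OF fJ, of n] T by (simp add: divide_right_mono)
  finally show ?thesis unfolding U_def J_def .
qed

lemma threshold_decoder_errorD:
  assumes "m < N" "threshold_decoder J T N cb ys \<noteq> m"
  shows "info_ratio_list J (zip (cb m) ys) \<le> T \<or> (\<exists>m'\<in>{0..<N} - {m}. T < info_ratio_list J (zip (cb m') ys))"
proof (rule ccontr)
  let ?P = "\<lambda>m. m < N \<and> T < info_ratio_list J (zip (cb m) ys)"
  assume "\<not> ?thesis"
  then have "?P m" and others: "\<And>m'. m' \<in> {0..<N} - {m} \<Longrightarrow> \<not> ?P m'"
    using assms by auto
  then have "Least ?P = m" using LeastI[of ?P m] by force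
  moreover have "\<exists>m'<N. T < info_ratio_list J (zip (cb m') ys)" using \<open>?P m\<close> by blast
  ultimately show False using assms unfolding threshold_decoder_def by simp
qed

lemma prob_threshold_decoder_error_le:
  assumes "m < N"
  shows "measure_pmf.prob M {ys. threshold_decoder J T N cb ys \<noteq> m} \<le>
    measure_pmf.prob M {ys. info_ratio_list J (zip (cb m) ys) \<le> T} +
    (\<Sum>m'\<in>{0..<N} - {m}. measure_pmf.prob M {ys. T < info_ratio_list J (zip (cb m') ys)})"
proof -
  have "measure_pmf.prob M {ys. threshold_decoder J T N cb ys \<noteq> m} \<le>
    measure_pmf.prob M ({ys. info_ratio_list J (zip (cb m) ys) \<le> T} \<union>
      (\<Union>m'\<in>{0..<N} - {m}. {ys. T < info_ratio_list J (zip (cb m') ys)}))"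
  proof (intro measure_pmf.finite_measure_mono subsetI)
    fix ys assume "ys \<in> {ys. threshold_decoder J T N cb ys \<noteq> m}"
    with threshold_decoder_errorD[OF assms] show "ys \<in> {ys. info_ratio_list J (zip (cb m) ys) \<le> T} \<union>
      (\<Union>m'\<in>{0..<N} - {m}. {ys. T < info_ratio_list J (zip (cb m') ys)})"
      by auto
  qed auto
  also have "\<dots> \<le> measure_pmf.prob M {ys. info_ratio_list J (zip (cb m) ys) \<le> T} +
     measure_pmf.prob M (\<Union>m'\<in>{0..<N} - {m}. {ys. T < info_ratio_list J (zip (cb m') ys)})"
    by (rule measure_Un_le) auto
  also have "measure_pmf.prob M (\<Union>m'\<in>{0..<N} - {m}. {ys. T < info_ratio_list J (zip (cb m') ys)}) \<le>
     (\<Sum>m'\<in>{0..<N} - {m}. measure_pmf.prob M {ys. T < info_ratio_list J (zip (cb m') ys)})"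
    by (rule measure_pmf.finite_measure_subadditive_finite) auto
  finally show ?thesis by simp
qed

lemma expectation_prob_threshold_decoder_error_le:
  fixes PU :: "'a pmf" and K :: "'a \<Rightarrow> 'b pmf"
  defines "J \<equiv> joint_pmf PU K"
  assumes fPU: "finite (set_pmf PU)" and fK: "\<And>u. finite (set_pmf (K u))" and T: "T > 0" and m: "m < N"
  shows "measure_pmf.expectation (random_codebook PU n N)
      (\<lambda>cb. measure_pmf.prob (channel_out K (cb m)) {ys. threshold_decoder J T N cb ys \<noteq> m})
    \<le> measure_pmf.prob (iid_list J n) {l. info_ratio_list J l \<le> T} + (real N - 1) / T"
proof -
  define U where "U = iid_list PU n"
  define A where "A = {0..<N}"
  define R where "R = Pi_pmf (A - {m}) [] (\<lambda>_. U)"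
  define miss where "miss us = measure_pmf.prob (channel_out K us) {ys. info_ratio_list J (zip us ys) \<le> T}" for us
  define hit where "hit us us' = measure_pmf.prob (channel_out K us) {ys. T < info_ratio_list J (zip us' ys)}"
    for us us'
  have fU: "finite (set_pmf U)" unfolding U_def using fPU by (rule finite_set_iid_list)
  have fR: "finite (set_pmf R)" unfolding R_def A_def using fU by (intro finite_set_Pi_pmf) auto
  have "measure_pmf.expectation (random_codebook PU n N)
      (\<lambda>cb. measure_pmf.prob (channel_out K (cb m)) {ys. threshold_decoder J T N cb ys \<noteq> m})
    = measure_pmf.expectation U (\<lambda>us. measure_pmf.expectation R (\<lambda>f.
        measure_pmf.prob (channel_out K us) {ys. threshold_decoder J T N (f(m := us)) ys \<noteq> m}))"
    unfolding random_codebook_def U_def[symmetric] A_def[symmetric] R_def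
    using m fU by (subst expectation_Pi_pmf_split[of A m]) (auto simp: A_def)
  also have "\<dots> \<le> measure_pmf.expectation U (\<lambda>us. measure_pmf.expectation R (\<lambda>f.
      miss us + (\<Sum>m'\<in>A - {m}. hit us (f m'))))"
  proof (intro expectation_mono_finite fU fR)
    fix us f
    have "(\<Sum>m'\<in>A - {m}. hit us ((f(m := us)) m')) = (\<Sum>m'\<in>A - {m}. hit us (f m'))"
      by (intro sum.cong) auto
    then show "measure_pmf.prob (channel_out K us) {ys. threshold_decoder J T N (f(m := us)) ys \<noteq> m}
        \<le> miss us + (\<Sum>m'\<in>A - {m}. hit us (f m'))"
      using prob_threshold_decoder_error_le[OF m, of "channel_out K us" J T "f(m := us)"]
      unfolding miss_def hit_def A_def by simp
  qed
  also have "\<dots> = measure_pmf.expectation U (\<lambda>us. miss us +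
      (\<Sum>m'\<in>A - {m}. measure_pmf.expectation U (\<lambda>us'. hit us us')))"
    using fR by (simp add: expectation_add_finite expectation_sum_finite R_def A_def
        expectation_Pi_pmf_component[where G = "hit _"])
  also have "\<dots> = measure_pmf.expectation U miss +
      (\<Sum>m'\<in>A - {m}. measure_pmf.expectation U (\<lambda>us. measure_pmf.expectation U (\<lambda>us'. hit us us')))"
    using fU by (simp add: expectation_add_finite expectation_sum_finite)
  also have "\<dots> \<le> measure_pmf.prob (iid_list J n) {l. info_ratio_list J l \<le> T} + (\<Sum>m'\<in>A - {m}. 1 / T)"
    using expectation_prob_channel_out[OF fPU fK, where P = "\<lambda>l. info_ratio_list J l \<le> T"]
      expectation_prob_info_ratio_list_indep_gt[OF fPU fK T, of n]
    unfolding miss_def hit_def U_def J_def by (intro add_mono sum_mono) auto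
  also have "\<dots> = measure_pmf.prob (iid_list J n) {l. info_ratio_list J l \<le> T} + (real N - 1) / T"
    using m by (simp add: A_def of_nat_diff)
  finally show ?thesis .
qed

lemma expectation_threshold_error_le:
  assumes fPU: "finite (set_pmf PU)" and fK: "\<And>u. finite (set_pmf (K u))" and N: "N > 0" and T: "T > 0"
  shows "measure_pmf.expectation (random_codebook PU n N) (threshold_error (joint_pmf PU K) K T N) \<le>
    measure_pmf.prob (iid_list (joint_pmf PU K) n) {l. info_ratio_list (joint_pmf PU K) l \<le> T} + (real N - 1) / T"
proof -
  let ?B = "measure_pmf.prob (iid_list (joint_pmf PU K) n) {l. info_ratio_list (joint_pmf PU K) l \<le> T} + (real N - 1) / T"
  have "measure_pmf.expectation (random_codebook PU n N) (threshold_error (joint_pmf PU K) K T N) =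
     (\<Sum>m<N. measure_pmf.expectation (random_codebook PU n N) (\<lambda>cb. measure_pmf.prob (channel_out K (cb m))
        {ys. threshold_decoder (joint_pmf PU K) T N cb ys \<noteq> m})) / N"
    unfolding threshold_error_def using fPU by (simp add: expectation_sum_finite finite_set_random_codebook)
  also have "\<dots> \<le> (\<Sum>m<N. ?B) / N"
    using expectation_prob_threshold_decoder_error_le[OF fPU fK T] by (intro divide_right_mono sum_mono) auto
  also have "\<dots> = ?B" using N by simp
  finally show ?thesis .
qed

definition codebook_out :: "('a \<Rightarrow> 'c pmf) \<Rightarrow> nat \<Rightarrow> (nat \<Rightarrow> 'a list) \<Rightarrow> 'c list pmf" where
  "codebook_out L N cb = bind_pmf (pmf_of_set {0..<N}) (\<lambda>m. channel_out L (cb m))"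

lemma pmf_codebook_out_fun_upd:
  assumes "m < N"
  shows "pmf (codebook_out L N (cb(m := us))) z =
    (pmf (channel_out L us) z + (\<Sum>m'\<in>{0..<N} - {m}. pmf (channel_out L (cb m')) z)) / N"
proof -
  have "pmf (codebook_out L N (cb(m := us))) z = (\<Sum>m'\<in>{0..<N}. pmf (channel_out L ((cb(m := us)) m')) z) / N"
    using assms unfolding codebook_out_def by (simp add: pmf_bind integral_pmf_of_set del: fun_upd_apply)
  also have "(\<Sum>m'\<in>{0..<N}. pmf (channel_out L ((cb(m := us)) m')) z) =
      pmf (channel_out L us) z + (\<Sum>m'\<in>{0..<N} - {m}. pmf (channel_out L ((cb(m := us)) m')) z)"
    using assms by (simp add: sum.remove fun_upd_same del: fun_upd_apply)
  also have "(\<Sum>m'\<in>{0..<N} - {m}. pmf (channel_out L ((cb(m := us)) m')) z) =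
      (\<Sum>m'\<in>{0..<N} - {m}. pmf (channel_out L (cb m')) z)"
    by (intro sum.cong) auto
  finally show ?thesis .
qed

lemma kl_div_codebook_out:
  assumes fL: "\<And>u. finite (set_pmf (L u))" and N: "N > 0"
  shows "kl_div (codebook_out L N cb) Q = (\<Sum>m\<in>{0..<N}. measure_pmf.expectation (channel_out L (cb m))
      (\<lambda>z. log 2 (pmf (codebook_out L N cb) z / pmf Q z))) / N"
proof -
  have fin: "finite (set_pmf (channel_out L us))" for us using fL by (rule finite_set_channel_out)
  then have "finite (set_pmf (codebook_out L N cb))" using N by (auto simp: codebook_out_def)
  then have "kl_div (codebook_out L N cb) Q =
      measure_pmf.expectation (codebook_out L N cb) (\<lambda>z. log 2 (pmf (codebook_out L N cb) z / pmf Q z))"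
    unfolding kl_div_def by (simp add: expectation_finite_pmf)
  also have "\<dots> = (\<Sum>m\<in>{0..<N}. measure_pmf.expectation (channel_out L (cb m))
      (\<lambda>z. log 2 (pmf (codebook_out L N cb) z / pmf Q z)) /\<^sub>R real N)"
    unfolding codebook_out_def using N fin by (subst pmf_expectation_bind_pmf_of_set) auto
  finally show ?thesis by (simp add: sum_divide_distrib divide_inverse_commute sum_distrib_left)
qed

text \<open>The soft-covering step: by Jensen, averaging the other \<open>card A - 1\<close> codewords leaves
  \<open>log 2 (1 + (p / q) / card A)\<close>, which \<open>log_one_plus_le_powr\<close> turns into a power.\<close>

lemma expectation_log_soft_covering_le:
  fixes g :: "'u \<Rightarrow> real" and p q t :: real
  assumes fU: "finite (set_pmf U)" and g: "\<And>u. g u \<ge> 0" and q: "measure_pmf.expectation U g = q" "q > 0"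
    and p: "p > 0" and A: "finite A" "m \<in> A" and t: "0 < t" "t \<le> 1"
  shows "measure_pmf.expectation (Pi_pmf (A - {m}) d (\<lambda>_. U))
      (\<lambda>f. log 2 ((p + (\<Sum>m'\<in>A - {m}. g (f m'))) / (card A * q)))
    \<le> real (card A) powr (-t) / (t * ln 2) * (p / q) powr t"
proof -
  define R where "R = Pi_pmf (A - {m}) d (\<lambda>_. U)"
  define N where "N = real (card A)"
  have cA: "card A \<ge> 1" using A by (auto simp: Suc_le_eq card_gt_0_iff)
  then have N: "N \<ge> 1" by (simp add: N_def)
  have fR: "finite (set_pmf R)" unfolding R_def using A fU by (intro finite_set_Pi_pmf) auto
  have "measure_pmf.expectation R (\<lambda>f. log 2 ((p + (\<Sum>m'\<in>A - {m}. g (f m'))) / (N * q)))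
      \<le> log 2 (measure_pmf.expectation R (\<lambda>f. (p + (\<Sum>m'\<in>A - {m}. g (f m'))) / (N * q)))"
    using p q N g by (intro expectation_log_le_log_expectation fR add_pos_nonneg divide_pos_pos sum_nonneg) auto
  also have "measure_pmf.expectation R (\<lambda>f. (p + (\<Sum>m'\<in>A - {m}. g (f m'))) / (N * q)) = (p / q) / N + (N - 1) / N"
  proof -
    have "measure_pmf.expectation R (\<lambda>f. \<Sum>m'\<in>A - {m}. g (f m')) = (N - 1) * q"
      using fR A q cA by (simp add: R_def N_def expectation_sum_finite expectation_Pi_pmf_component of_nat_diff)
    moreover have "measure_pmf.expectation R (\<lambda>f. (p + (\<Sum>m'\<in>A - {m}. g (f m'))) / (N * q)) =
        (p + measure_pmf.expectation R (\<lambda>f. \<Sum>m'\<in>A - {m}. g (f m'))) / (N * q)"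
      using fR by (rule expectation_affine_finite)
    ultimately show ?thesis using q N by (simp add: field_simps)
  qed
  also have "log 2 ((p / q) / N + (N - 1) / N) \<le> log 2 (1 + (p / q) / N)"
    using p q N by (subst log_le_cancel_iff) (auto intro: add_pos_nonneg)
  also have "\<dots> \<le> ((p / q) / N) powr t / (t * ln 2)"
    using p q N t by (intro log_one_plus_le_powr) auto
  also have "\<dots> = N powr (-t) / (t * ln 2) * (p / q) powr t"
    using p q N by (simp add: powr_divide powr_mult powr_minus field_simps)
  finally show ?thesis unfolding R_def N_def .
qed

lemma expectation_channel_out_ratio_powr:
  assumes fPU: "finite (set_pmf PU)" and fL: "\<And>u. finite (set_pmf (L u))"
  shows "measure_pmf.expectation (iid_list PU n) (\<lambda>us. measure_pmf.expectation (channel_out L us)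
      (\<lambda>z. (pmf (channel_out L us) z / pmf (iid_list (bind_pmf PU L) n) z) powr t))
    = info_moment (joint_pmf PU L) t ^ n"
proof -
  define J where "J = joint_pmf PU L"
  have "measure_pmf.expectation (iid_list PU n) (\<lambda>us. measure_pmf.expectation (channel_out L us)
      (\<lambda>z. (pmf (channel_out L us) z / pmf (iid_list (bind_pmf PU L) n) z) powr t))
    = measure_pmf.expectation (bind_pmf (iid_list PU n) (\<lambda>us. map_pmf (Pair us) (channel_out L us)))
      (\<lambda>(us, z). (pmf (channel_out L us) z / pmf (iid_list (bind_pmf PU L) n) z) powr t)"
    using fPU fL by (subst expectation_bind_pmf_finite) (auto intro: finite_set_iid_list finite_set_channel_out)
  also have "\<dots> = measure_pmf.expectation (iid_list J n) (\<lambda>l.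
      (pmf (channel_out L (map fst l)) (map snd l) / pmf (iid_list (bind_pmf PU L) n) (map snd l)) powr t)"
    unfolding bind_iid_list_channel_out_Pair J_def by (simp add: unzip_def)
  also have "\<dots> = measure_pmf.expectation (iid_list J n) (\<lambda>l. info_ratio_list J l powr t)"
    unfolding J_def
    by (intro integral_cong_AE) (auto simp: AE_measure_pmf_iff ratio_channel_out_eq_info_ratio_list)
  also have "\<dots> = info_moment J t ^ n"
    unfolding J_def using fPU fL by (intro expectation_info_ratio_list_powr finite_set_joint_pmf)
  finally show ?thesis unfolding J_def .
qed

lemma expectation_log_codebook_out_le:
  fixes PU :: "'a pmf" and L :: "'a \<Rightarrow> 'c pmf" and n :: nat
  defines "Qn \<equiv> iid_list (bind_pmf PU L) n"
  assumes fPU: "finite (set_pmf PU)" and fL: "\<And>u. finite (set_pmf (L u))"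
    and Qpos: "\<And>z. pmf (bind_pmf PU L) z > 0" and m: "m < N" and t: "0 < t" "t \<le> 1"
  shows "measure_pmf.expectation (random_codebook PU n N) (\<lambda>cb. measure_pmf.expectation (channel_out L (cb m))
      (\<lambda>z. log 2 (pmf (codebook_out L N cb) z / pmf Qn z)))
    \<le> real N powr (-t) / (t * ln 2) * info_moment (joint_pmf PU L) t ^ n"
proof -
  define U where "U = iid_list PU n"
  define A where "A = {0..<N}"
  define R where "R = Pi_pmf (A - {m}) [] (\<lambda>_. U)"
  define C where "C = real N powr (-t) / (t * ln 2)"
  define X where "X f us z = (pmf (channel_out L us) z + (\<Sum>m'\<in>A - {m}. pmf (channel_out L (f m')) z)) / (N * pmf Qn z)"
    for f us z
  have fU: "finite (set_pmf U)" unfolding U_def using fPU by (rule finite_set_iid_list)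
  have fKn: "\<And>us. finite (set_pmf (channel_out L us))" using fL by (rule finite_set_channel_out)
  have fR: "finite (set_pmf R)" unfolding R_def A_def using fU by (intro finite_set_Pi_pmf) auto
  have X: "pmf (codebook_out L N (f(m := us))) z / pmf Qn z = X f us z" for f us z
    using m by (simp add: pmf_codebook_out_fun_upd X_def A_def divide_divide_eq_left)
  have "measure_pmf.expectation (random_codebook PU n N) (\<lambda>cb. measure_pmf.expectation (channel_out L (cb m))
      (\<lambda>z. log 2 (pmf (codebook_out L N cb) z / pmf Qn z)))
    = measure_pmf.expectation U (\<lambda>us. measure_pmf.expectation R (\<lambda>f.
        measure_pmf.expectation (channel_out L ((f(m := us)) m))
          (\<lambda>z. log 2 (pmf (codebook_out L N (f(m := us))) z / pmf Qn z))))"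
    unfolding random_codebook_def U_def[symmetric] A_def[symmetric] R_def
    using m fU by (subst expectation_Pi_pmf_split[of A m]) (auto simp: A_def)
  also have "\<dots> = measure_pmf.expectation U (\<lambda>us. measure_pmf.expectation R (\<lambda>f.
        measure_pmf.expectation (channel_out L us) (\<lambda>z. log 2 (X f us z))))"
    by (simp only: X fun_upd_same)
  also have "\<dots> = measure_pmf.expectation U (\<lambda>us. measure_pmf.expectation (channel_out L us)
      (\<lambda>z. measure_pmf.expectation R (\<lambda>f. log 2 (X f us z))))"
    by (intro arg_cong[where f = "measure_pmf.expectation U"] ext expectation_swap_finite fR fKn)
  also have "\<dots> \<le> measure_pmf.expectation U (\<lambda>us. measure_pmf.expectation (channel_out L us)
      (\<lambda>z. C * (pmf (channel_out L us) z / pmf Qn z) powr t))"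
  proof (intro expectation_mono_finite fU fKn)
    fix us z assume us: "us \<in> set_pmf U" and z: "z \<in> set_pmf (channel_out L us)"
    have "length z = n"
      using length_of_set_channel_out[OF z] set_pmf_iid_listD[of us PU n] us by (simp add: U_def)
    then have q: "pmf Qn z > 0" unfolding Qn_def by (intro pmf_iid_list_pos Qpos)
    have "measure_pmf.expectation U (\<lambda>u. pmf (channel_out L u) z) = pmf Qn z"
      by (simp add: pmf_bind[symmetric] U_def bind_iid_list_channel_out Qn_def)
    then show "measure_pmf.expectation R (\<lambda>f. log 2 (X f us z)) \<le> C * (pmf (channel_out L us) z / pmf Qn z) powr t"
      using expectation_log_soft_covering_le[OF fU _ _ q _ _ _ t, where g = "\<lambda>u. pmf (channel_out L u) z"
          and p = "pmf (channel_out L us) z" and A = A and m = m and d = "[]"] z m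
      by (simp add: X_def R_def C_def A_def pmf_positive)
  qed
  also have "\<dots> = C * info_moment (joint_pmf PU L) t ^ n"
    using expectation_channel_out_ratio_powr[OF fPU fL, where n = n and t = t] by (simp add: U_def Qn_def)
  finally show ?thesis unfolding C_def .
qed

lemma expectation_kl_codebook_out_le:
  fixes PU :: "'a pmf" and L :: "'a \<Rightarrow> 'c pmf"
  assumes fPU: "finite (set_pmf PU)" and fL: "\<And>u. finite (set_pmf (L u))"
    and Qpos: "\<And>z. pmf (bind_pmf PU L) z > 0" and N: "N > 0" and t: "0 < t" "t \<le> 1"
  shows "measure_pmf.expectation (random_codebook PU n N) (\<lambda>cb. kl_div (codebook_out L N cb) (iid_list (bind_pmf PU L) n))
     \<le> real N powr (-t) / (t * ln 2) * info_moment (joint_pmf PU L) t ^ n"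
proof -
  let ?B = "real N powr (-t) / (t * ln 2) * info_moment (joint_pmf PU L) t ^ n"
  have "measure_pmf.expectation (random_codebook PU n N) (\<lambda>cb. kl_div (codebook_out L N cb) (iid_list (bind_pmf PU L) n))
    = (\<Sum>m\<in>{0..<N}. measure_pmf.expectation (random_codebook PU n N) (\<lambda>cb. measure_pmf.expectation
        (channel_out L (cb m)) (\<lambda>z. log 2 (pmf (codebook_out L N cb) z / pmf (iid_list (bind_pmf PU L) n) z)))) / N"
    using fPU by (simp add: kl_div_codebook_out[OF fL N] expectation_sum_finite finite_set_random_codebook)
  also have "\<dots> \<le> (\<Sum>m\<in>{0..<N}. ?B) / N"
    using expectation_log_codebook_out_le[OF fPU fL Qpos _ t] by (intro divide_right_mono sum_mono) auto
  also have "\<dots> = ?B" using N by simp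
  finally show ?thesis .
qed

section \<open>Shannon strategies\<close>

text \<open>Transmitting \<open>x (u i) (s i)\<close> turns the state-dependent channel into the memoryless channel
  \<open>strategy_channel\<close> from the auxiliary alphabet to the pair of outputs.\<close>

definition strategy_channel ::
  "'s pmf \<Rightarrow> ('x \<Rightarrow> 's \<Rightarrow> ('y \<times> 'z) pmf) \<Rightarrow> ('u \<Rightarrow> 's \<Rightarrow> 'x) \<Rightarrow> 'u \<Rightarrow> ('y \<times> 'z) pmf" where
  "strategy_channel QS W xf u = bind_pmf QS (\<lambda>s. W (xf u s) s)"

definition strategy_encoder :: "('u \<Rightarrow> 's \<Rightarrow> 'x) \<Rightarrow> (nat \<Rightarrow> 'u list) \<Rightarrow> nat \<Rightarrow> nat \<Rightarrow> 's list \<Rightarrow> 'x" where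
  "strategy_encoder xf cb i m ss = xf (cb m ! i) (ss ! i)"

lemma code_exp_strategy_encoder:
  assumes N: "N > 0" and len: "\<And>m. m < N \<Longrightarrow> length (cb m) = n"
  shows "map_pmf (\<lambda>(m, ss, ys, zs). (m, ys, zs)) (code_exp QS W n N (strategy_encoder xf cb)) =
    bind_pmf (pmf_of_set {0..<N}) (\<lambda>m. map_pmf (\<lambda>yz. (m, map fst yz, map snd yz))
      (channel_out (strategy_channel QS W xf) (cb m)))"
  unfolding code_exp_def
proof (subst map_bind_pmf, rule bind_pmf_cong[OF refl])
  fix m assume "m \<in> set_pmf (pmf_of_set {0..<N})"
  then have m: "m < N" using N by auto
  have W: "map (\<lambda>i. W (strategy_encoder xf cb i m (take (Suc i) ss)) (ss ! i)) [0..<n] =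
      map2 (\<lambda>u s. W (xf u s) s) (cb m) ss" if "ss \<in> set_pmf (iid_list QS n)" for ss
    using set_pmf_iid_listD[OF that] len[OF m] by (intro nth_equalityI) (auto simp: strategy_encoder_def)
  have "map_pmf (\<lambda>(m, ss, ys, zs). (m, ys, zs)) (bind_pmf (iid_list QS n) (\<lambda>ss.
          bind_pmf (prod_pmf_list (map (\<lambda>i. W (strategy_encoder xf cb i m (take (Suc i) ss)) (ss ! i)) [0..<n]))
           (\<lambda>yz. return_pmf (m, ss, map fst yz, map snd yz))))
      = map_pmf (\<lambda>yz. (m, map fst yz, map snd yz)) (bind_pmf (iid_list QS n) (\<lambda>ss.
          prod_pmf_list (map2 (\<lambda>u s. W (xf u s) s) (cb m) ss)))"
    unfolding map_bind_pmf
    by (rule bind_pmf_cong[OF refl]) (simp add: W map_pmf_def bind_assoc_pmf bind_return_pmf)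
  also have "\<dots> = map_pmf (\<lambda>yz. (m, map fst yz, map snd yz)) (channel_out (strategy_channel QS W xf) (cb m))"
    by (subst bind_iid_list_map2[OF len[OF m]]) (simp add: strategy_channel_def[abs_def] channel_out_def)
  finally show "map_pmf (\<lambda>(m, ss, ys, zs). (m, ys, zs)) (bind_pmf (iid_list QS n) (\<lambda>ss.
          bind_pmf (prod_pmf_list (map (\<lambda>i. W (strategy_encoder xf cb i m (take (Suc i) ss)) (ss ! i)) [0..<n]))
           (\<lambda>yz. return_pmf (m, ss, map fst yz, map snd yz)))) =
    map_pmf (\<lambda>yz. (m, map fst yz, map snd yz)) (channel_out (strategy_channel QS W xf) (cb m))" .
qed

lemma err_prob_strategy_encoder:
  fixes W :: "'x \<Rightarrow> 's \<Rightarrow> ('y::finite \<times> 'z::finite) pmf"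
  assumes N: "N > 0" and len: "\<And>m. m < N \<Longrightarrow> length (cb m) = n"
  shows "err_prob QS W n N (strategy_encoder xf cb) g =
     (\<Sum>m<N. measure_pmf.prob (channel_out (\<lambda>u. map_pmf fst (strategy_channel QS W xf u)) (cb m))
       {ys. g ys \<noteq> m}) / N"
proof -
  let ?V = "strategy_channel QS W xf"
  have fV: "finite (set_pmf (channel_out ?V us))" for us
    by (rule finite_set_channel_out) simp
  have Y: "channel_out (\<lambda>u. map_pmf fst (?V u)) us = map_pmf (map fst) (channel_out ?V us)" for us
    by (simp add: channel_out_def map_prod_pmf_list o_def)
  have "err_prob QS W n N (strategy_encoder xf cb) g =
    measure_pmf.prob (map_pmf (\<lambda>(m, ss, ys, zs). (m, ys, zs)) (code_exp QS W n N (strategy_encoder xf cb)))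
      {(m, ys, zs). g ys \<noteq> m}"
    unfolding err_prob_def by (simp add: vimage_def case_prod_unfold)
  also have "\<dots> = measure_pmf.prob (bind_pmf (pmf_of_set {0..<N}) (\<lambda>m.
      map_pmf (\<lambda>yz. (m, map fst yz, map snd yz)) (channel_out ?V (cb m)))) {(m, ys, zs). g ys \<noteq> m}"
    by (simp only: code_exp_strategy_encoder[OF N len])
  also have "\<dots> = measure_pmf.expectation (pmf_of_set {0..<N}) (\<lambda>m. measure_pmf.prob
      (map_pmf (\<lambda>yz. (m, map fst yz, map snd yz)) (channel_out ?V (cb m))) {(m, ys, zs). g ys \<noteq> m})"
    using N fV by (intro prob_bind_pmf_finite) auto
  also have "\<dots> = measure_pmf.expectation (pmf_of_set {0..<N}) (\<lambda>m. measure_pmf.prob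
      (channel_out (\<lambda>u. map_pmf fst (?V u)) (cb m)) {ys. g ys \<noteq> m})"
    by (simp add: Y vimage_def)
  finally show ?thesis using N by (subst (asm) integral_pmf_of_set) (auto simp: atLeast0LessThan)
qed

lemma warden_dist_strategy_encoder:
  assumes N: "N > 0" and len: "\<And>m. m < N \<Longrightarrow> length (cb m) = n"
  shows "warden_dist QS W n N (strategy_encoder xf cb) =
    codebook_out (\<lambda>u. map_pmf snd (strategy_channel QS W xf u)) N cb"
proof -
  have "warden_dist QS W n N (strategy_encoder xf cb) = map_pmf (\<lambda>(m, ys, zs). zs)
      (map_pmf (\<lambda>(m, ss, ys, zs). (m, ys, zs)) (code_exp QS W n N (strategy_encoder xf cb)))"
    unfolding warden_dist_def by (simp add: pmf.map_comp o_def case_prod_unfold)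
  also have "\<dots> = codebook_out (\<lambda>u. map_pmf snd (strategy_channel QS W xf u)) N cb"
    by (simp only: code_exp_strategy_encoder[OF N len])
      (simp add: codebook_out_def channel_out_def map_bind_pmf pmf.map_comp o_def map_prod_pmf_list)
  finally show ?thesis .
qed

lemma aux_joint_marginal:
  "map_pmf (\<lambda>(s, u, x, y, z). (u, F (y, z))) (aux_joint QS W PU xf) =
    joint_pmf PU (\<lambda>u. map_pmf F (strategy_channel QS W xf u))"
proof -
  have "map_pmf (\<lambda>(s, u, x, y, z). (u, F (y, z))) (aux_joint QS W PU xf) =
     bind_pmf QS (\<lambda>s. bind_pmf PU (\<lambda>u. bind_pmf (W (xf u s) s) (\<lambda>yz. return_pmf (u, F yz))))"
    unfolding aux_joint_def by (simp add: map_bind_pmf)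
  also have "\<dots> = bind_pmf PU (\<lambda>u. bind_pmf QS (\<lambda>s. bind_pmf (W (xf u s) s) (\<lambda>yz. return_pmf (u, F yz))))"
    by (rule bind_commute_pmf)
  also have "\<dots> = joint_pmf PU (\<lambda>u. map_pmf F (strategy_channel QS W xf u))"
    unfolding joint_pmf_def strategy_channel_def by (simp add: map_pmf_def bind_assoc_pmf bind_return_pmf)
  finally show ?thesis .
qed

lemma aux_joint_warden:
  "map_pmf (\<lambda>(s, u, x, y, z). z) (aux_joint QS W PU xf) = bind_pmf PU (\<lambda>u. map_pmf snd (strategy_channel QS W xf u))"
proof -
  have "map_pmf (\<lambda>(s, u, x, y, z). z) (aux_joint QS W PU xf) =
      map_pmf snd (map_pmf (\<lambda>(s, u, x, y, z). (u, snd (y, z))) (aux_joint QS W PU xf))"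
    by (simp add: pmf.map_comp o_def case_prod_unfold)
  then show ?thesis by (simp only: aux_joint_marginal joint_pmf_snd)
qed

section \<open>A counting converse\<close>

text \<open>Each output sequence is decoded to a single message, so at most \<open>CARD('y) ^ n\<close> messages
  can be decoded correctly with certainty.\<close>

lemma prob_correct_decoding_le:
  fixes W :: "'x \<Rightarrow> 's \<Rightarrow> ('y::finite \<times> 'z) pmf"
  assumes N: "N > 0"
  shows "measure_pmf.prob (code_exp QS W n N f) {(m, ss, ys, zs). g ys = m} \<le> real (CARD('y) ^ n) / N"
proof -
  define Ln where "Ln = {ys :: 'y list. set ys \<subseteq> UNIV \<and> length ys = n}"
  have fLn: "finite Ln" unfolding Ln_def by (rule finite_lists_length_eq) simp
  have cLn: "card Ln = CARD('y) ^ n" unfolding Ln_def by (rule card_lists_length_eq) simp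
  define \<pi> where "\<pi> = (\<lambda>(m :: nat, ss :: 's list, ys :: 'y list, zs :: 'z list). (m, ys))"
  define K where "K m = map_pmf \<pi> (bind_pmf (iid_list QS n) (\<lambda>ss.
     bind_pmf (prod_pmf_list (map (\<lambda>i. W (f i m (take (Suc i) ss)) (ss ! i)) [0..<n])) (\<lambda>yz.
     return_pmf (m, ss, map fst yz, map snd yz))))" for m
  have setK: "set_pmf (K m) \<subseteq> {m} \<times> Ln" for m
    unfolding K_def \<pi>_def Ln_def by (auto dest!: length_of_set_prod_pmf_list)
  have fK: "finite (set_pmf (K m))" for m by (rule finite_subset[OF setK]) (simp add: fLn)
  have correct_m: "measure_pmf.prob (K m) {(m, ys). g ys = m} \<le> real (card {ys \<in> Ln. g ys = m})" for m
  proof -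
    have "measure_pmf.prob (K m) {(m, ys). g ys = m} = measure_pmf.prob (K m) ({(m, ys). g ys = m} \<inter> set_pmf (K m))"
      by (simp add: measure_Int_set_pmf)
    also have "\<dots> \<le> measure_pmf.prob (K m) ({m} \<times> {ys \<in> Ln. g ys = m})"
      using setK[of m] by (intro measure_pmf.finite_measure_mono) auto
    also have "\<dots> \<le> real (card ({m} \<times> {ys \<in> Ln. g ys = m}))"
      using fLn by (intro prob_le_card) auto
    finally show ?thesis by (simp add: card_cartesian_product_singleton)
  qed
  have "(\<Sum>m\<in>{0..<N}. card {ys \<in> Ln. g ys = m}) = card (\<Union>m\<in>{0..<N}. {ys \<in> Ln. g ys = m})"
    using fLn by (intro card_UN_disjoint[symmetric]) auto
  also have "\<dots> \<le> card Ln" using fLn by (intro card_mono) auto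
  finally have disjoint: "(\<Sum>m\<in>{0..<N}. real (card {ys \<in> Ln. g ys = m})) \<le> real (card Ln)"
    by (simp flip: of_nat_sum)
  have "map_pmf \<pi> (code_exp QS W n N f) = bind_pmf (pmf_of_set {0..<N}) K"
    unfolding code_exp_def K_def by (simp add: map_bind_pmf)
  moreover have "measure_pmf.prob (code_exp QS W n N f) {(m, ss, ys, zs). g ys = m} =
      measure_pmf.prob (map_pmf \<pi> (code_exp QS W n N f)) {(m, ys). g ys = m}"
    by (simp add: \<pi>_def vimage_def case_prod_unfold)
  ultimately have "measure_pmf.prob (code_exp QS W n N f) {(m, ss, ys, zs). g ys = m} =
      measure_pmf.expectation (pmf_of_set {0..<N}) (\<lambda>m. measure_pmf.prob (K m) {(m, ys). g ys = m})"
    using N fK by (simp add: prob_bind_pmf_finite)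
  also have "\<dots> = (\<Sum>m\<in>{0..<N}. measure_pmf.prob (K m) {(m, ys). g ys = m}) / N"
    using N by (subst integral_pmf_of_set) auto
  also have "\<dots> \<le> (\<Sum>m\<in>{0..<N}. real (card {ys \<in> Ln. g ys = m})) / N"
    by (intro divide_right_mono sum_mono correct_m) simp
  also have "\<dots> \<le> real (card Ln) / N"
    using disjoint by (intro divide_right_mono) simp_all
  finally show ?thesis by (simp add: cLn)
qed

lemma covert_achievable_le:
  fixes W :: "'x \<Rightarrow> 's \<Rightarrow> ('y::finite \<times> 'z) pmf"
  assumes "covert_achievable QS W x0 R"
  shows "R \<le> log 2 (CARD('y)) + 1"
proof (rule ccontr)
  assume "\<not> ?thesis"
  then have R: "log 2 (CARD('y)) - R < -1" by simp
  from assms obtain f g where "(\<lambda>n. err_prob QS W n (num_msgs n R) (f n) (g n)) \<longlonglongrightarrow> 0"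
    unfolding covert_achievable_def by blast
  then obtain n where n: "n \<ge> 1" "err_prob QS W n (num_msgs n R) (f n) (g n) < 1/2"
    using order_tendstoD(2)[of _ 0 sequentially "1/2"] eventually_ge_at_top[of 1]
    by (metis (no_types, lifting) eventually_at_top_linorder le_refl eventually_conj_iff half_gt_zero
        zero_less_one)
  have "real (CARD('y) ^ n) / num_msgs n R \<le> 2 powr (real n * log 2 (CARD('y))) / 2 powr (real n * R)"
    using num_msgs_ge[of n R] by (intro frac_le) (simp_all add: powr_power[symmetric])
  also have "\<dots> = 2 powr (real n * (log 2 (CARD('y)) - R))"
    by (simp add: powr_diff[symmetric] right_diff_distrib)
  also have "\<dots> \<le> 2 powr (-1)"
    using R n(1) by (intro powr_mono) (auto intro: order_trans[OF mult_right_mono_neg[of 1 "real n"]])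
  finally have "real (CARD('y) ^ n) / num_msgs n R \<le> 1/2" by (simp add: powr_minus)
  moreover have "err_prob QS W n (num_msgs n R) (f n) (g n) =
      1 - measure_pmf.prob (code_exp QS W n (num_msgs n R) (f n)) {(m, ss, ys, zs). g n ys = m}"
    unfolding err_prob_def
    by (subst measure_pmf.prob_compl[symmetric]) (auto intro: arg_cong[where f = "measure_pmf.prob _"])
  moreover have "measure_pmf.prob (code_exp QS W n (num_msgs n R) (f n)) {(m, ss, ys, zs). g n ys = m}
      \<le> real (CARD('y) ^ n) / num_msgs n R"
    by (rule prob_correct_decoding_le[OF num_msgs_pos])
  ultimately show False using n(2) by linarith
qed

section \<open>Achievability\<close>

lemma exists_codebook_error_kl_le:
  fixes PU :: "'a pmf" and KY :: "'a \<Rightarrow> 'b pmf" and KZ :: "'a \<Rightarrow> 'c pmf"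
  assumes fPU: "finite (set_pmf PU)" and fKY: "\<And>u. finite (set_pmf (KY u))"
    and fKZ: "\<And>u. finite (set_pmf (KZ u))" and Qpos: "\<And>z. pmf (bind_pmf PU KZ) z > 0"
    and N: "N > 0" and T: "T > 0" and t1: "t1 > 0" and t2: "0 < t2" "t2 \<le> 1"
  shows "\<exists>cb\<in>set_pmf (random_codebook PU n N).
      threshold_error (joint_pmf PU KY) KY T N cb + kl_div (codebook_out KZ N cb) (iid_list (bind_pmf PU KZ) n)
    \<le> T powr t1 * info_moment (joint_pmf PU KY) (-t1) ^ n + (real N - 1) / T
      + real N powr (-t2) / (t2 * ln 2) * info_moment (joint_pmf PU KZ) t2 ^ n"
proof -
  define F where "F cb = threshold_error (joint_pmf PU KY) KY T N cb
      + kl_div (codebook_out KZ N cb) (iid_list (bind_pmf PU KZ) n)" for cb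
  have fCB: "finite (set_pmf (random_codebook PU n N))" using fPU by (rule finite_set_random_codebook)
  have fJ: "finite (set_pmf (joint_pmf PU KY))" using fPU fKY by (rule finite_set_joint_pmf)
  have "measure_pmf.expectation (random_codebook PU n N) F
    \<le> (measure_pmf.prob (iid_list (joint_pmf PU KY) n) {l. info_ratio_list (joint_pmf PU KY) l \<le> T}
        + (real N - 1) / T) + real N powr (-t2) / (t2 * ln 2) * info_moment (joint_pmf PU KZ) t2 ^ n"
    unfolding F_def expectation_add_finite[OF fCB]
    using expectation_threshold_error_le[OF fPU fKY N T, of n]
      expectation_kl_codebook_out_le[OF fPU fKZ Qpos N t2, of n]
    by (rule add_mono)
  also have "\<dots> \<le> T powr t1 * info_moment (joint_pmf PU KY) (-t1) ^ n + (real N - 1) / T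
      + real N powr (-t2) / (t2 * ln 2) * info_moment (joint_pmf PU KZ) t2 ^ n"
    using prob_info_ratio_list_le[OF fJ T t1, of n] by simp
  finally have E: "measure_pmf.expectation (random_codebook PU n N) F \<le> T powr t1 * info_moment (joint_pmf PU KY) (-t1) ^ n
      + (real N - 1) / T + real N powr (-t2) / (t2 * ln 2) * info_moment (joint_pmf PU KZ) t2 ^ n" .
  obtain cb where cb: "cb \<in> set_pmf (random_codebook PU n N)" "F cb \<le> measure_pmf.expectation (random_codebook PU n N) F"
    using exists_le_expectation[OF fCB] by blast
  show ?thesis using order.trans[OF cb(2) E] cb(1) unfolding F_def by blast
qed

lemma tendsto_zero_if_nonneg_add:
  fixes a b :: "nat \<Rightarrow> real"
  assumes "\<And>n. 0 \<le> a n" "\<And>n. 0 \<le> b n" "(\<lambda>n. a n + b n) \<longlonglongrightarrow> 0"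
  shows "a \<longlonglongrightarrow> 0" "b \<longlonglongrightarrow> 0"
  using assms by (auto intro!: tendsto_sandwich[OF _ _ tendsto_const assms(3)] always_eventually
      simp: add_increasing add_increasing2)

lemma covert_achievable_if_codebooks:
  fixes QS :: "'s pmf" and W :: "'x \<Rightarrow> 's \<Rightarrow> ('y::finite \<times> 'z::finite) pmf" and PU :: "'u pmf"
    and xf :: "'u \<Rightarrow> 's \<Rightarrow> 'x"
  defines "VY \<equiv> \<lambda>u. map_pmf fst (strategy_channel QS W xf u)"
    and "VZ \<equiv> \<lambda>u. map_pmf snd (strategy_channel QS W xf u)"
  assumes full: "set_pmf (Q0 QS W x0) = UNIV"
    and cbs: "\<And>n. cbs n \<in> set_pmf (random_codebook PU n (num_msgs n R))"
    and bound: "\<And>n. threshold_error (joint_pmf PU VY) VY (T n) (num_msgs n R) (cbs n)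
      + kl_div (codebook_out VZ (num_msgs n R) (cbs n)) (iid_list (Q0 QS W x0) n) \<le> b n"
    and b: "b \<longlonglongrightarrow> 0"
  shows "covert_achievable QS W x0 R"
proof -
  define f where "f n = strategy_encoder xf (cbs n)" for n
  define g where "g n = threshold_decoder (joint_pmf PU VY) (T n) (num_msgs n R) (cbs n)" for n
  have len: "\<And>n m. m < num_msgs n R \<Longrightarrow> length (cbs n m) = n"
    using cbs length_of_set_random_codebook by blast
  have err: "err_prob QS W n (num_msgs n R) (f n) (g n) = threshold_error (joint_pmf PU VY) VY (T n) (num_msgs n R) (cbs n)"
    for n
    unfolding f_def g_def threshold_error_def VY_def
    by (simp add: err_prob_strategy_encoder[OF num_msgs_pos len])
  have warden: "warden_dist QS W n (num_msgs n R) (f n) = codebook_out VZ (num_msgs n R) (cbs n)" for n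
    unfolding f_def VZ_def by (rule warden_dist_strategy_encoder[OF num_msgs_pos len])
  have err_nonneg: "threshold_error (joint_pmf PU VY) VY (T n) (num_msgs n R) (cbs n) \<ge> 0" for n
    unfolding threshold_error_def by (simp add: sum_nonneg)
  have kl_nonneg: "kl_div (codebook_out VZ (num_msgs n R) (cbs n)) (iid_list (Q0 QS W x0) n) \<ge> 0" for n
  proof (rule kl_div_nonneg)
    show "finite (set_pmf (codebook_out VZ (num_msgs n R) (cbs n)))"
      using num_msgs_pos[of n R] by (auto simp: codebook_out_def intro!: finite_set_channel_out)
    fix zs assume "zs \<in> set_pmf (codebook_out VZ (num_msgs n R) (cbs n))"
    then have "length zs = n"
      using num_msgs_pos[of n R] len by (auto simp: codebook_out_def dest: length_of_set_channel_out)
    then show "pmf (iid_list (Q0 QS W x0) n) zs > 0" using full by (intro pmf_iid_list_pos) (simp add: pmf_positive)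
  qed
  have "(\<lambda>n. threshold_error (joint_pmf PU VY) VY (T n) (num_msgs n R) (cbs n)
      + kl_div (codebook_out VZ (num_msgs n R) (cbs n)) (iid_list (Q0 QS W x0) n)) \<longlonglongrightarrow> 0"
    using err_nonneg kl_nonneg bound
    by (intro tendsto_sandwich[OF _ _ tendsto_const b] always_eventually) (auto intro: add_nonneg_nonneg)
  from tendsto_zero_if_nonneg_add[OF err_nonneg kl_nonneg this]
  have "(\<lambda>n. err_prob QS W n (num_msgs n R) (f n) (g n)) \<longlonglongrightarrow> 0"
    and "(\<lambda>n. kl_div (warden_dist QS W n (num_msgs n R) (f n)) (iid_list (Q0 QS W x0) n)) \<longlonglongrightarrow> 0"
    by (simp_all only: err warden)
  then show ?thesis unfolding covert_achievable_def by blast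
qed

text \<open>The threshold is \<open>T n = 2 powr (n * \<gamma>)\<close> with \<open>\<gamma>\<close> strictly between \<open>R\<close> and \<open>I(U;Y)\<close>; the
  Chernoff exponents \<open>t1\<close> and \<open>t2\<close> make all three terms of the random-coding bound decay
  exponentially.\<close>

lemma covert_achievable_strategy:
  fixes QS :: "'s pmf" and W :: "'x \<Rightarrow> 's \<Rightarrow> ('y::finite \<times> 'z::finite) pmf" and PU :: "'u pmf"
    and xf :: "'u \<Rightarrow> 's \<Rightarrow> 'x"
  defines "VY \<equiv> \<lambda>u. map_pmf fst (strategy_channel QS W xf u)"
    and "VZ \<equiv> \<lambda>u. map_pmf snd (strategy_channel QS W xf u)"
  assumes full: "set_pmf (Q0 QS W x0) = UNIV" and fPU: "finite (set_pmf PU)"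
    and Qz: "bind_pmf PU VZ = Q0 QS W x0"
    and lo: "mut_inf (joint_pmf PU VZ) < R" and hi: "R < mut_inf (joint_pmf PU VY)"
  shows "covert_achievable QS W x0 R"
proof -
  define JY where "JY = joint_pmf PU VY"
  define JZ where "JZ = joint_pmf PU VZ"
  have fVY: "\<And>u. finite (set_pmf (VY u))" and fVZ: "\<And>u. finite (set_pmf (VZ u))" by simp_all
  have fJY: "finite (set_pmf JY)" unfolding JY_def using fPU fVY by (rule finite_set_joint_pmf)
  have fJZ: "finite (set_pmf JZ)" unfolding JZ_def using fPU fVZ by (rule finite_set_joint_pmf)
  have Qpos: "\<And>z. pmf (bind_pmf PU VZ) z > 0" using full Qz by (simp add: pmf_positive)
  define \<gamma> where "\<gamma> = (R + mut_inf JY) / 2"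
  have \<gamma>: "R < \<gamma>" "\<gamma> < mut_inf JY" using hi by (auto simp: \<gamma>_def JY_def)
  obtain t1 where t1: "t1 > 0" "info_moment JY (-t1) < 2 powr (-t1 * \<gamma>)"
    using info_moment_neg_lt_of_mut_inf_gt[OF fJY \<gamma>(2)] by blast
  obtain t2 where t2: "t2 > 0" "t2 \<le> 1" "info_moment JZ t2 < 2 powr (t2 * R)"
    using info_moment_lt_of_mut_inf_lt[OF fJZ, of R] lo by (auto simp: JZ_def)
  define T where "T n = 2 powr (real n * \<gamma>)" for n
  define b where "b n = T n powr t1 * info_moment JY (-t1) ^ n + (real (num_msgs n R) - 1) / T n
     + real (num_msgs n R) powr (-t2) / (t2 * ln 2) * info_moment JZ t2 ^ n" for n
  have "\<forall>n. \<exists>cb\<in>set_pmf (random_codebook PU n (num_msgs n R)). threshold_error JY VY (T n) (num_msgs n R) cb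
      + kl_div (codebook_out VZ (num_msgs n R) cb) (iid_list (bind_pmf PU VZ) n) \<le> b n"
  proof
    fix n
    show "\<exists>cb\<in>set_pmf (random_codebook PU n (num_msgs n R)). threshold_error JY VY (T n) (num_msgs n R) cb
      + kl_div (codebook_out VZ (num_msgs n R) cb) (iid_list (bind_pmf PU VZ) n) \<le> b n"
      using exists_codebook_error_kl_le[OF fPU fVY fVZ Qpos num_msgs_pos[of n R] _ t1(1) t2(1,2), where T = "T n" and n = n]
      unfolding b_def JY_def JZ_def by (simp add: T_def)
  qed
  then obtain cbs where cbs: "\<And>n. cbs n \<in> set_pmf (random_codebook PU n (num_msgs n R))"
    and bound: "\<And>n. threshold_error JY VY (T n) (num_msgs n R) (cbs n)
      + kl_div (codebook_out VZ (num_msgs n R) (cbs n)) (iid_list (bind_pmf PU VZ) n) \<le> b n"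
    by metis
  have "b \<longlonglongrightarrow> 0"
    unfolding b_def T_def using t2(1) info_moment_nonneg[OF fJY] t1(2) info_moment_nonneg[OF fJZ] t2(3) \<gamma>(1)
    by (rule random_coding_bound_tendsto_zero)
  moreover have "threshold_error (joint_pmf PU VY) VY (T n) (num_msgs n R) (cbs n)
      + kl_div (codebook_out VZ (num_msgs n R) (cbs n)) (iid_list (Q0 QS W x0) n) \<le> b n" for n
    using bound[of n] by (simp add: JY_def Qz)
  ultimately show ?thesis
    unfolding VY_def VZ_def by (intro covert_achievable_if_codebooks[OF full cbs])
qed

lemma mut_inf_le_covert_capacity:
  fixes QS :: "'s::finite pmf" and W :: "'x::finite \<Rightarrow> 's \<Rightarrow> ('y::finite \<times> 'z::finite) pmf"
  assumes full: "set_pmf (Q0 QS W x0) = UNIV" and P: "P \<in> D_set QS W x0"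
  shows "mut_inf (map_pmf (\<lambda>(s, u, x, y, z). (u, y)) P) \<le> covert_capacity QS W x0"
proof -
  from P obtain PU xf where PU: "set_pmf PU \<subseteq> {0..<CARD('x) + 1}" and P_def: "P = aux_joint QS W PU xf"
    and Pz: "map_pmf (\<lambda>(s, u, x, y, z). z) P = Q0 QS W x0"
    and gap: "mut_inf (map_pmf (\<lambda>(s, u, x, y, z). (u, y)) P) > mut_inf (map_pmf (\<lambda>(s, u, x, y, z). (u, z)) P)"
    unfolding D_set_def by blast
  have UY: "map_pmf (\<lambda>(s, u, x, y, z). (u, y)) P = joint_pmf PU (\<lambda>u. map_pmf fst (strategy_channel QS W xf u))"
    and UZ: "map_pmf (\<lambda>(s, u, x, y, z). (u, z)) P = joint_pmf PU (\<lambda>u. map_pmf snd (strategy_channel QS W xf u))"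
    using aux_joint_marginal[of fst QS W PU xf] aux_joint_marginal[of snd QS W PU xf] by (simp_all add: P_def)
  have fPU: "finite (set_pmf PU)" using PU by (rule finite_subset) simp
  have Qz: "bind_pmf PU (\<lambda>u. map_pmf snd (strategy_channel QS W xf u)) = Q0 QS W x0"
    using Pz aux_joint_warden[of QS W PU xf] by (simp add: P_def)
  have bdd: "bdd_above {R. covert_achievable QS W x0 R}"
    by (rule bdd_aboveI[of _ "log 2 (CARD('y)) + 1"]) (auto intro: covert_achievable_le)
  from gap show ?thesis
    unfolding covert_capacity_def UY UZ
  proof (rule dense_le_bounded)
    fix w assume "mut_inf (joint_pmf PU (\<lambda>u. map_pmf snd (strategy_channel QS W xf u))) < w"
      and "w < mut_inf (joint_pmf PU (\<lambda>u. map_pmf fst (strategy_channel QS W xf u)))"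
    then have "covert_achievable QS W x0 w" by (rule covert_achievable_strategy[OF full fPU Qz])
    then show "w \<le> Sup {R. covert_achievable QS W x0 R}" using bdd by (intro cSup_upper) auto
  qed
qed

theorem theorem8:
  fixes QS :: "'s::finite pmf"
    and W :: "'x::finite \<Rightarrow> 's \<Rightarrow> ('y::finite \<times> 'z::finite) pmf"
    and x0 :: 'x
  assumes "set_pmf (Q0 QS W x0) = UNIV"
  shows "\<forall>R \<in> rate_set QS W x0. R \<le> covert_capacity QS W x0"
proof
  fix R assume "R \<in> rate_set QS W x0"
  then obtain P where "P \<in> D_set QS W x0" and "R \<le> mut_inf (map_pmf (\<lambda>(s, u, x, y, z). (u, y)) P)"
    unfolding rate_set_def by blast
  with mut_inf_le_covert_capacity[OF assms] show "R \<le> covert_capacity QS W x0" by fastforce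
qed

end
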